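(* Let $g\ge1$, $0<\epsilon<1$, $\delta\in(0,1)$, and suppose $\ell_{i,t}\in[0,1]$ for all $i=1,\ldots,N$ and $t=1,\ldots,n$. Suppose $\mathcal A$ satisfies the regret bound $(\ast)$ with respect to the expected losses $\bar\ell_t$, and Algorithm 2 is run with weight function $\{\hat w^{\mathcal L_1}_t\}$ and learning parameters with $\eta_{t+1}\le\eta_t$. Then for any $T\in\mathcal T_n$ and any $a$, with probability at least $1-\delta$, \[ \widehat L_n-L_n(T,a)\le L_{C(T),n}(C(T)+1)\rho_{\mathcal E}\!\left(\frac{n}{L_{C(T),n}(C(T)+1)}\right)+\sum_{t=1}^n\frac{\eta_t}{8}+\frac{r_n\!\left(L_{C(T),n}(C(T)+1)-1\right)}{\eta_n}+\sqrt{\frac n2\ln\frac1\delta}, \] where $r_n(C)=(C+\epsilon)\ln n+\ln(1+\epsilon)-C\ln\epsilon$, and $L_{C,n}=\left\lceil\frac{\log n}{\lfloor\log(g+1)\rfloor}\right\rceil+1$ if $C=0$, $L_{C,n}=\frac{\log\frac{n}{C+1}}{\lfloor\log(g+1)\rfloor}+2$ if $C\ge1$.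
   Context: $\log$ is base 2. Randomized prediction: in rounds $t=1,\ldots,n$, the decision maker picks a distribution $\boldsymbol p_t$ in the probability simplex $\Delta_N\subset\mathbb R^N$ and draws an action $I_t\in\{1,\ldots,N\}$ from $\boldsymbol p_t$ (conditionally on the past); the adversary assigns losses $\ell_{i,t}\in[0,1]$, possibly depending on the decision maker's past actions. $\widehat L_n=\sum_{t=1}^n\ell_{I_t,t}$, and the expected loss is $\bar\ell_t(\boldsymbol p)=\sum_{i=1}^Np_i\ell_{i,t}$. Base experts are $\mathcal E=\{1,\ldots,N\}$ (expert $i$ corresponds to the unit vector $e_i\in\Delta_N$). A base algorithm $\mathcal A$ chooses distributions in $\Delta_N$ and satisfies $(\ast)$: for every $n$ and every loss sequence, $\sum_{t=1}^n\bar\ell_t(\boldsymbol p_{\mathcal A,t})-\min_i\sum_{t=1}^n\ell_{i,t}\le\rho_{\mathcal E}(n)$, where $\rho_{\mathcal E}:[0,\infty)\to[0,\infty)$ is nondecreasing, concave, $\rho_{\mathcal E}(0)=0$. $\boldsymbol p_{\mathcal A,t}(t')$ is the distribution chosen at time $t$ by an instance of $\mathcal A$ started at time $t'$. Transition paths: $\mathcal T_t$ is the set of $T=(t_1,\ldots,t_C;t)$, $C\ge0$, $1<t_1<\cdots<t_C\le t$, $C(T)=C$, $t_0=1$, $t_{C+1}=t+1$; $\tau_t(T)$ the last switch point $\le t$ (or $1$); $T_{t-1}$ the truncation to time $t-1$ (obtained by dropping switch points $>t-1$). A meta expert $(T,a)$, $T\in\mathcal T_n$, $a=(i_0,\ldots,i_C)\in\{1,\ldots,N\}^{C+1}$,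 has loss $L_n(T,a)=\sum_{c=0}^C\sum_{t=t_c}^{t_{c+1}-1}\ell_{i_c,t}$. For $T\in\mathcal T_t$, $\bar L_t(\mathcal A,T)=\sum_{c=0}^C\sum_{s=t_c}^{t_{c+1}-1}\bar\ell_s(\boldsymbol p_{\mathcal A,s}(t_c))$. Weights: given switch probabilities $p(t|t')$, the Markov chain $U_1=1$, $\Pr(U_t=t\mid U_{t-1}=t')=p(t|t')=1-\Pr(U_t=t'\mid U_{t-1}=t')$ defines $w_t(T)$ as the probability of the realization jumping exactly at the switch points of $T$. For $w^{\mathcal L_1}$: $\pi(j)=j^{-(1+\epsilon)}$, $Z_t=\sum_{j=1}^t\pi(j)$, $Z_0=0$, $Z_\infty=\sum_{j\ge1}\pi(j)$, $p(t|t')=\pi(t-1)/(Z_\infty-Z_{t-2})$. Pruning with parameter $g$: for $s=o2^u$, $o$ odd, $h_t(s)=1$ if $s\le t<s+g2^u$ else $0$; $\hat p(t|t')=1-h_t(t')(1-p(t|t'))$; $\hat w^{\mathcal L_1}_t$ is the Markov weight function for $\hat p$. Algorithm 2 (inputs $\mathcal A$, $\{\hat w_t\}$, $\eta_t>0$): at each $t$, choose $T\in\mathcal T_t$ with probability $q_t(T)=\frac{\hat w_t(T)e^{-\eta_t\bar L_{t-1}(\mathcal A,T_{t-1})}}{\sum_{T'\in\mathcal T_t}\hat w_t(T')e^{-\eta_t\bar L_{t-1}(\mathcal A,T'_{t-1})}}$, set $\boldsymbol p_t=\boldsymbol p_{\mathcal A,t}(\tau_t(T))$, and draw $I_t\sim\boldsymbol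 p_t$. *)

theory Defs
  imports "HOL-Analysis.Analysis" "HOL-Computational_Algebra.Primes"
begin

(* Experts are 1..N; a distribution / loss vector is a function nat => real
   (only the values at 1..N matter). *)

definition is_distrib :: "nat \<Rightarrow> (nat \<Rightarrow> real) \<Rightarrow> bool" where
  "is_distrib N p \<longleftrightarrow> (\<forall>i\<in>{1..N}. 0 \<le> p i) \<and> (\<Sum>i=1..N. p i) = 1"

definition ebar :: "nat \<Rightarrow> (nat \<Rightarrow> real) \<Rightarrow> (nat \<Rightarrow> real) \<Rightarrow> real" where
  "ebar N p l = (\<Sum>i=1..N. p i * l i)"

definition valid_loss :: "nat \<Rightarrow> (nat \<Rightarrow> real) \<Rightarrow> bool" where
  "valid_loss N l \<longleftrightarrow> (\<forall>i\<in>{1..N}. 0 \<le> l i \<and> l i \<le> 1)"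

(* A base algorithm maps the list of loss vectors seen so far (since it was
   started) to a distribution.  p_{A,t}(t') = A [l_{t'}, ..., l_{t-1}]. *)
definition base_alg_ok ::
  "nat \<Rightarrow> ((nat \<Rightarrow> real) list \<Rightarrow> (nat \<Rightarrow> real)) \<Rightarrow> (real \<Rightarrow> real) \<Rightarrow> bool" where
  "base_alg_ok N A \<rho> \<longleftrightarrow>
     (\<forall>ls. (\<forall>l\<in>set ls. valid_loss N l) \<longrightarrow> is_distrib N (A ls)) \<and>
     (\<forall>n (L :: nat \<Rightarrow> nat \<Rightarrow> real). (\<forall>t\<in>{1..n}. valid_loss N (L t)) \<longrightarrow>
        (\<forall>i\<in>{1..N}. (\<Sum>t=1..n. ebar N (A (map L [1..<t])) (L t)) - (\<Sum>t=1..n. L t i)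
                        \<le> \<rho> (real n)))"

definition rho_ok :: "(real \<Rightarrow> real) \<Rightarrow> bool" where
  "rho_ok \<rho> \<longleftrightarrow> (\<forall>x\<ge>0. \<rho> x \<ge> 0) \<and> mono_on {0..} \<rho> \<and> concave_on {0..} \<rho> \<and> \<rho> 0 = 0"

(* Transition paths: T = (t_1,...,t_C; t) is represented by the set of switch
   points S \<subseteq> {2..t}. *)
definition paths :: "nat \<Rightarrow> nat set set" where
  "paths t = Pow {2..t}"

definition tau :: "nat \<Rightarrow> nat set \<Rightarrow> nat" where
  "tau t S = Max (insert 1 {s\<in>S. s \<le> t})"

definition trunc :: "nat \<Rightarrow> nat set \<Rightarrow> nat set" where
  "trunc t S = {s\<in>S. s \<le> t}"

(* t_c for T = (S; t):  t_0 = 1, t_1 < ... < t_C the elements of S, t_{C+1} = t+1 *)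
definition tpt :: "nat \<Rightarrow> nat set \<Rightarrow> nat \<Rightarrow> nat" where
  "tpt t S c = (if c = 0 then 1 else if c \<le> card S then sorted_list_of_set S ! (c - 1) else t + 1)"

(* L_n(T,a) for meta expert (T,a), a c = i_c *)
definition meta_loss :: "(nat \<Rightarrow> nat \<Rightarrow> real) \<Rightarrow> nat \<Rightarrow> nat set \<Rightarrow> (nat \<Rightarrow> nat) \<Rightarrow> real" where
  "meta_loss ll n S a = (\<Sum>c=0..card S. \<Sum>t\<in>{tpt n S c..<tpt n S (c+1)}. ll t (a c))"

definition Abar :: "nat \<Rightarrow> ((nat \<Rightarrow> real) list \<Rightarrow> (nat \<Rightarrow> real)) \<Rightarrow> (nat \<Rightarrow> nat \<Rightarrow> real)
                    \<Rightarrow> nat \<Rightarrow> nat set \<Rightarrow> real" where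
  "Abar N A ll t S = (\<Sum>c=0..card S. \<Sum>s\<in>{tpt t S c..<tpt t S (c+1)}.
                        ebar N (A (map ll [tpt t S c..<s])) (ll s))"

(* Markov weight function for switch probabilities p t t' = p(t|t') *)
definition markov_w :: "(nat \<Rightarrow> nat \<Rightarrow> real) \<Rightarrow> nat \<Rightarrow> nat set \<Rightarrow> real" where
  "markov_w p t S = (\<Prod>s\<in>{2..t}. (if s \<in> S then p s (tau (s - 1) S) else 1 - p s (tau (s - 1) S)))"

definition piL1 :: "real \<Rightarrow> nat \<Rightarrow> real" where
  "piL1 \<epsilon> j = real j powr (-(1 + \<epsilon>))"

definition ZL1 :: "real \<Rightarrow> nat \<Rightarrow> real" where
  "ZL1 \<epsilon> t = (\<Sum>j=1..t. piL1 \<epsilon> j)"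

definition ZL1_inf :: "real \<Rightarrow> real" where
  "ZL1_inf \<epsilon> = (\<Sum>j. piL1 \<epsilon> (Suc j))"

definition pL1 :: "real \<Rightarrow> nat \<Rightarrow> nat \<Rightarrow> real" where
  "pL1 \<epsilon> t t' = piL1 \<epsilon> (t - 1) / (ZL1_inf \<epsilon> - ZL1 \<epsilon> (t - 2))"

(* pruning: s = o * 2^u with o odd, u = multiplicity 2 s *)
definition hprune :: "nat \<Rightarrow> nat \<Rightarrow> nat \<Rightarrow> real" where
  "hprune g t s = (if s \<le> t \<and> t < s + g * 2 ^ multiplicity (2::nat) s then 1 else 0)"

definition phatL1 :: "nat \<Rightarrow> real \<Rightarrow> nat \<Rightarrow> nat \<Rightarrow> real" where
  "phatL1 g \<epsilon> t t' = 1 - hprune g t t' * (1 - pL1 \<epsilon> t t')"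

definition whatL1 :: "nat \<Rightarrow> real \<Rightarrow> nat \<Rightarrow> nat set \<Rightarrow> real" where
  "whatL1 g \<epsilon> = markov_w (phatL1 g \<epsilon>)"

definition qalg :: "nat \<Rightarrow> ((nat \<Rightarrow> real) list \<Rightarrow> (nat \<Rightarrow> real)) \<Rightarrow> (nat \<Rightarrow> nat set \<Rightarrow> real)
                   \<Rightarrow> (nat \<Rightarrow> real) \<Rightarrow> (nat \<Rightarrow> nat \<Rightarrow> real) \<Rightarrow> nat \<Rightarrow> nat set \<Rightarrow> real" where
  "qalg N A w \<eta> ll t S =
     w t S * exp (- \<eta> t * Abar N A ll (t - 1) (trunc (t - 1) S)) /
     (\<Sum>S'\<in>paths t. w t S' * exp (- \<eta> t * Abar N A ll (t - 1) (trunc (t - 1) S')))"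

definition palg :: "nat \<Rightarrow> ((nat \<Rightarrow> real) list \<Rightarrow> (nat \<Rightarrow> real)) \<Rightarrow> (nat \<Rightarrow> nat set \<Rightarrow> real)
                   \<Rightarrow> (nat \<Rightarrow> real) \<Rightarrow> (nat \<Rightarrow> nat \<Rightarrow> real) \<Rightarrow> nat \<Rightarrow> nat \<Rightarrow> real" where
  "palg N A w \<eta> ll t i = (\<Sum>S\<in>paths t. qalg N A w \<eta> ll t S * A (map ll [tau t S..<t]) i)"

(* Adaptive adversary: adv h is the loss vector at time length h + 1, given the
   past actions h = [I_1,...,I_{t-1}].  Realized losses along an action history: *)
definition loss_of :: "(nat list \<Rightarrow> nat \<Rightarrow> real) \<Rightarrow> nat list \<Rightarrow> nat \<Rightarrow> nat \<Rightarrow> real" where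
  "loss_of adv hs t = adv (take (t - 1) hs)"

definition Lhat :: "(nat list \<Rightarrow> nat \<Rightarrow> real) \<Rightarrow> nat \<Rightarrow> nat list \<Rightarrow> real" where
  "Lhat adv n hs = (\<Sum>t=1..n. loss_of adv hs t (hs ! (t - 1)))"

(* probability that the action sequence (I_1,...,I_n) satisfies E, when
   Algorithm 2 plays against adversary adv *)
definition alg_prob :: "nat \<Rightarrow> ((nat \<Rightarrow> real) list \<Rightarrow> (nat \<Rightarrow> real)) \<Rightarrow> (nat \<Rightarrow> nat set \<Rightarrow> real)
                   \<Rightarrow> (nat \<Rightarrow> real) \<Rightarrow> (nat list \<Rightarrow> nat \<Rightarrow> real) \<Rightarrow> nat \<Rightarrow> (nat list \<Rightarrow> bool) \<Rightarrow> real" where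
  "alg_prob N A w \<eta> adv n E =
     (\<Sum>hs\<in>{hs. length hs = n \<and> set hs \<subseteq> {1..N} \<and> E hs}.
        \<Prod>t=1..n. palg N A w \<eta> (loss_of adv hs) t (hs ! (t - 1)))"

definition r_n :: "real \<Rightarrow> nat \<Rightarrow> real \<Rightarrow> real" where
  "r_n \<epsilon> n C = (C + \<epsilon>) * ln (real n) + ln (1 + \<epsilon>) - C * ln \<epsilon>"

definition L_Cn :: "nat \<Rightarrow> nat \<Rightarrow> nat \<Rightarrow> real" where
  "L_Cn g C n = (if C = 0
      then real_of_int \<lceil>log 2 (real n) / real_of_int \<lfloor>log 2 (real g + 1)\<rfloor>\<rceil> + 1
      else log 2 (real n / (real C + 1)) / real_of_int \<lfloor>log 2 (real g + 1)\<rfloor> + 2)"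

end

(*
  Refine the comparison path T = (t_1, ..., t_C; n): inside each of its C + 1 segments [a, b),
  add the first multiples of 2^(u+k), 2^(u+2k), ... after a, where 2^u is the largest power of two
  dividing a and k = floor (log (g + 1)). Each new point lies in the pruning window
  [s, s + g 2^v) of the previous switch s (2^v being the largest power of two dividing s), so
  pruning never forces Algorithm 2 off the refined path T', whose prior weight is therefore at
  least (eps/n)^|T'| n^(-eps) / (1 + eps). Only about log (b - a) / k such points fit into a
  segment, and concavity of log gives |T'| + 1 <= L_{C,n} (C + 1).

  Exponential weights over transition paths (Hoeffding's lemma in every round, Jensen's inequality
  when eta decreases) bound the expected loss by the loss of the base algorithm restarted at the
  switches of T' plus ln (1 / w(T')) / eta_n + sum eta_t / 8; each of the |T'| + 1 restarts costs
  rho of its segment length, which concavity of rho turns into the first term of the bound.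
  Finally the Azuma-Hoeffding inequality for realised minus expected losses adds
  sqrt (n/2 ln (1/delta)) with probability at least 1 - delta.
*)

theory Submission
  imports Defs "HOL-Probability.Hoeffding"
begin

section \<open>Hoeffding's lemma and concavity\<close>

lemma ln_bernoulli_mgf_le:
  fixes m \<theta> :: real
  assumes "0 \<le> m" "m \<le> 1"
  shows "ln (1 + m * (exp \<theta> - 1)) \<le> \<theta> * m + \<theta>\<^sup>2 / 8"
proof (cases "\<theta> \<ge> 0")
  case True
  from Hoeffdings_lemma_aux[OF True assms(1)] show ?thesis by (simp add: algebra_simps)
next
  case False
  define h where "h = - \<theta>"
  have h: "h \<ge> 0" and m': "1 - m \<ge> 0" using False assms by (auto simp: h_def)
  have "(1 - m) * (exp h - 1) \<ge> 0" using h m' by simp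
  then have pos: "1 + (1 - m) * (exp h - 1) > 0" by linarith
  \<comment> \<open>reflect \<open>m \<mapsto> 1 - m\<close> to reduce to a nonnegative exponent\<close>
  have eq: "1 + m * (exp \<theta> - 1) = exp \<theta> * (1 + (1 - m) * (exp h - 1))"
    unfolding h_def by (simp add: algebra_simps exp_minus field_simps)
  have "ln (1 + m * (exp \<theta> - 1)) = \<theta> + ln (1 + (1 - m) * (exp h - 1))"
    unfolding eq using pos by (simp add: ln_mult)
  also have "\<dots> \<le> \<theta> + (h * (1 - m) + h\<^sup>2 / 8)"
    using Hoeffdings_lemma_aux[OF h m'] by simp
  also have "\<dots> = \<theta> * m + \<theta>\<^sup>2 / 8" unfolding h_def by (simp add: algebra_simps power2_eq_square)
  finally show ?thesis .
qed

lemma hoeffding_lemma_finite: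
  fixes p x :: "'a \<Rightarrow> real"
  assumes "finite J" "\<And>j. j \<in> J \<Longrightarrow> p j \<ge> 0" "(\<Sum>j\<in>J. p j) = 1"
    "\<And>j. j \<in> J \<Longrightarrow> 0 \<le> x j \<and> x j \<le> 1"
  shows "(\<Sum>j\<in>J. p j * exp (\<theta> * x j)) \<le> exp (\<theta> * (\<Sum>j\<in>J. p j * x j) + \<theta>\<^sup>2 / 8)"
proof -
  define m where "m = (\<Sum>j\<in>J. p j * x j)"
  have m0: "0 \<le> m" unfolding m_def using assms by (auto intro!: sum_nonneg)
  have "m \<le> (\<Sum>j\<in>J. p j)"
    unfolding m_def using assms by (intro sum_mono) (simp add: mult_left_le)
  then have m1: "m \<le> 1" using assms by simp
  have chord: "exp (\<theta> * x j) \<le> (1 - x j) + x j * exp \<theta>" if "j \<in> J" for j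
    using convex_onD[OF exp_convex, of "x j" 0 \<theta>] assms(4)[OF that] by (simp add: mult.commute)
  have "(\<Sum>j\<in>J. p j * exp (\<theta> * x j)) \<le> (\<Sum>j\<in>J. p j * ((1 - x j) + x j * exp \<theta>))"
    using assms chord by (intro sum_mono mult_left_mono) auto
  also have "\<dots> = 1 + m * (exp \<theta> - 1)"
    using assms(3) unfolding m_def
    by (simp add: algebra_simps sum_subtractf sum_distrib_right sum_distrib_left sum.distrib)
  also have "\<dots> = exp (ln (1 + m * (exp \<theta> - 1)))"
  proof -
    have "0 < (1 - m) + m * exp \<theta>"
      using m0 m1 by (cases "m = 1") (simp_all add: add_pos_nonneg)
    then show ?thesis by (simp add: algebra_simps)
  qed
  also have "\<dots> \<le> exp (\<theta> * m + \<theta>\<^sup>2 / 8)" using ln_bernoulli_mgf_le[OF m0 m1] by simp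
  finally show ?thesis unfolding m_def .
qed

lemma concave_sum_le_card_mult_mean:
  fixes f :: "real \<Rightarrow> real" and y :: "'a \<Rightarrow> real"
  assumes "concave_on I f" "finite J" "J \<noteq> {}" "\<And>j. j \<in> J \<Longrightarrow> y j \<in> I"
  shows "(\<Sum>j\<in>J. f (y j)) \<le> card J * f ((\<Sum>j\<in>J. y j) / card J)"
proof -
  have c: "real (card J) > 0" using assms by (simp add: card_gt_0_iff)
  have "(\<Sum>j\<in>J. (1 / card J) * f (y j)) \<le> f (\<Sum>j\<in>J. (1 / card J) *\<^sub>R y j)"
    by (rule concave_on_sum[OF assms(2,3,1)]) (use assms c in auto)
  also have "(\<Sum>j\<in>J. (1 / card J) *\<^sub>R y j) = (\<Sum>j\<in>J. y j) / card J"
    by (simp add: sum_divide_distrib)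
  finally have "(\<Sum>j\<in>J. f (y j)) / card J \<le> f ((\<Sum>j\<in>J. y j) / card J)"
    by (simp add: sum_divide_distrib)
  then show ?thesis using c by (simp add: divide_le_eq mult.commute)
qed

lemma concave_on_powr:
  assumes "0 < r" "r \<le> 1"
  shows "concave_on {0<..} (\<lambda>x::real. x powr r)"
proof (rule f''_le0_imp_concave[where f' = "\<lambda>x. r * x powr (r - 1)"
                                    and f'' = "\<lambda>x. r * ((r - 1) * x powr (r - 2))"])
  fix x :: real assume x: "x \<in> {0<..}"
  then show "((\<lambda>x. x powr r) has_real_derivative r * x powr (r - 1)) (at x)"
    by (auto intro!: derivative_eq_intros)
  have "((\<lambda>x. r * x powr (r - 1)) has_real_derivative r * ((r - 1) * x powr (r - 1 - 1))) (at x)"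
    using x by (auto intro!: derivative_eq_intros)
  then show "((\<lambda>x. r * x powr (r - 1)) has_real_derivative r * ((r - 1) * x powr (r - 2))) (at x)"
    by (simp add: algebra_simps)
  show "r * ((r - 1) * x powr (r - 2)) \<le> 0"
    using assms by (intro mult_nonneg_nonpos mult_nonpos_nonneg) auto
qed simp

lemma weighted_sum_powr_le_powr_weighted_sum:
  fixes w y :: "'a \<Rightarrow> real"
  assumes "0 < r" "r \<le> 1" "finite J" "J \<noteq> {}" "\<And>j. j \<in> J \<Longrightarrow> w j \<ge> 0"
    "(\<Sum>j\<in>J. w j) = 1" "\<And>j. j \<in> J \<Longrightarrow> y j > 0"
  shows "(\<Sum>j\<in>J. w j * y j powr r) \<le> (\<Sum>j\<in>J. w j * y j) powr r"
  using concave_on_sum[OF assms(3,4) concave_on_powr[OF assms(1,2)] assms(6,5), of y] assms(7)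
  by simp

lemma concave_perspective_mono:
  fixes f :: "real \<Rightarrow> real"
  assumes "concave_on {0..} f" "f 0 = 0" "0 < K" "K \<le> X" "0 \<le> n"
  shows "K * f (n / K) \<le> X * f (n / X)"
proof -
  have X: "X > 0" using assms by simp
  have "(1 - K / X) * f 0 + (K / X) * f (n / K) \<le> f ((1 - K / X) *\<^sub>R 0 + (K / X) *\<^sub>R (n / K))"
    by (rule concave_onD[OF assms(1)]) (use assms X in auto)
  then have "(K / X) * f (n / K) \<le> f (n / X)" using assms X by simp
  then show ?thesis using X by (simp add: field_simps)
qed

section \<open>Transition paths and their segments\<close>

definition switch_count :: "nat set \<Rightarrow> nat \<Rightarrow> nat" where
  "switch_count S s = card {x\<in>S. x \<le> s}"

definition next_switch :: "nat set \<Rightarrow> nat \<Rightarrow> nat \<Rightarrow> nat" where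
  "next_switch X n s = Min (insert (n + 1) {x\<in>X. s < x})"

lemma tpt_in_switches:
  assumes "S \<subseteq> {2..t}" "1 \<le> c" "c \<le> card S"
  shows "tpt t S c \<in> S"
proof -
  have "finite S" using assms(1) finite_subset by blast
  then show ?thesis
    using assms nth_mem[of "c - 1" "sorted_list_of_set S"] by (simp add: tpt_def)
qed

lemma tpt_strict_mono:
  assumes S: "S \<subseteq> {2..t}" and "1 \<le> t" "i < j" "j \<le> card S + 1"
  shows "tpt t S i < tpt t S j"
proof -
  have f: "finite S" using S finite_subset by blast
  have last: "tpt t S j = t + 1" if "\<not> j \<le> card S" using that assms by (simp add: tpt_def)
  show ?thesis
  proof (cases "i = 0")
    case True
    then show ?thesis
      using tpt_in_switches[OF S, of j] last assms by (cases "j \<le> card S") (auto simp: tpt_def)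
  next
    case False
    have iS: "tpt t S i \<in> S" using tpt_in_switches[OF S] False assms by simp
    show ?thesis
    proof (cases "j \<le> card S")
      case True
      have "sorted_list_of_set S ! (i - 1) < sorted_list_of_set S ! (j - 1)"
        using f True assms False strict_sorted_list_of_set[of S]
        by (intro sorted_wrt_nth_less[where P = "(<)"]) auto
      then show ?thesis using True assms False by (simp add: tpt_def)
    qed (use iS S last in auto)
  qed
qed

lemma tpt_mono:
  assumes S: "S \<subseteq> {2..t}" and "i \<le> j" "j \<le> card S + 1"
  shows "tpt t S i \<le> tpt t S j"
proof (cases "t = 0")
  case True
  then show ?thesis using S assms by (auto simp: tpt_def)
next
  case False
  then show ?thesis using tpt_strict_mono[OF S, of i j] assms by (cases "i = j") auto
qed

lemma switches_eq_tpt_image: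
  assumes "S \<subseteq> {2..t}"
  shows "S = tpt t S ` {1..card S}"
proof
  show "tpt t S ` {1..card S} \<subseteq> S" using tpt_in_switches[OF assms] by auto
  have f: "finite S" using assms finite_subset by blast
  show "S \<subseteq> tpt t S ` {1..card S}"
  proof
    fix x assume "x \<in> S"
    then obtain k where k: "k < card S" "sorted_list_of_set S ! k = x"
      using f by (metis in_set_conv_nth set_sorted_list_of_set length_sorted_list_of_set)
    then have "tpt t S (k + 1) = x" by (simp add: tpt_def)
    then show "x \<in> tpt t S ` {1..card S}" using k by force
  qed
qed

lemma tpt_segment:
  assumes S: "S \<subseteq> {2..t}" and c: "c \<le> card S" "tpt t S c \<le> s" "s < tpt t S (c + 1)"
  shows "switch_count S s = c" "tau s S = tpt t S c"
proof -
  have below: "{x\<in>S. x \<le> s} = tpt t S ` {1..c}"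
  proof
    show "{x \<in> S. x \<le> s} \<subseteq> tpt t S ` {1..c}"
    proof
      fix x assume x: "x \<in> {x \<in> S. x \<le> s}"
      then obtain c' where c': "c' \<in> {1..card S}" "x = tpt t S c'"
        using switches_eq_tpt_image[OF S] by blast
      have "c' \<le> c"
        using tpt_mono[OF S, of "c + 1" c'] c' x c by (cases "c' \<le> c") auto
      then show "x \<in> tpt t S ` {1..c}" using c' by auto
    qed
    show "tpt t S ` {1..c} \<subseteq> {x \<in> S. x \<le> s}"
      using tpt_in_switches[OF S] tpt_mono[OF S, of _ c] c by force
  qed
  have "1 \<le> t"
  proof (rule ccontr)
    assume "\<not> 1 \<le> t"
    moreover from this have "S = {}" using S by auto
    ultimately show False using c by (simp add: tpt_def)
  qed
  then have "inj_on (tpt t S) {1..c}"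
    by (intro inj_onI) (metis S c(1) atLeastAtMost_iff le_trans linorder_neqE_nat
        tpt_strict_mono less_irrefl trans_le_add1)
  then show "switch_count S s = c" unfolding switch_count_def below by (simp add: card_image)
  have "tpt t S 0 = 1" by (simp add: tpt_def)
  then have "\<forall>y \<in> insert 1 (tpt t S ` {1..c}). y \<le> tpt t S c"
    using tpt_mono[OF S, of _ c] tpt_mono[OF S, of 0 c] c by auto
  moreover have "tpt t S c \<in> insert 1 (tpt t S ` {1..c})"
    using \<open>tpt t S 0 = 1\<close> by (cases "c = 0") auto
  ultimately show "tau s S = tpt t S c"
    unfolding tau_def below by (intro Max_eqI) auto
qed

lemma sum_consecutive_intervals:
  fixes f :: "nat \<Rightarrow> nat"
  assumes "\<And>c. c \<le> K \<Longrightarrow> f c \<le> f (Suc c)"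
  shows "(\<Sum>c=0..K. \<Sum>s\<in>{f c..<f (Suc c)}. G s) = (\<Sum>s\<in>{f 0..<f (Suc K)}. G s)"
  using assms
proof (induction K)
  case (Suc K)
  have "f 0 \<le> f c" if "c \<le> Suc K" for c
    using that Suc.prems by (induction c) (auto intro: le_trans)
  then have "f 0 \<le> f (Suc K)" by simp
  then show ?case
    using Suc sum.atLeastLessThan_concat[of "f 0" "f (Suc K)" "f (Suc (Suc K))" G] by simp
qed simp

lemma sum_segments_eq_sum_switch_count:
  assumes S: "S \<subseteq> {2..t}"
  shows "(\<Sum>c=0..card S. \<Sum>s\<in>{tpt t S c..<tpt t S (c + 1)}. F c s)
       = (\<Sum>s=1..t. F (switch_count S s) s)"
proof -
  have "(\<Sum>c=0..card S. \<Sum>s\<in>{tpt t S c..<tpt t S (c + 1)}. F c s)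
      = (\<Sum>c=0..card S. \<Sum>s\<in>{tpt t S c..<tpt t S (c + 1)}. F (switch_count S s) s)"
    using tpt_segment(1)[OF S] by (intro sum.cong refl) simp
  also have "\<dots> = (\<Sum>s\<in>{tpt t S 0..<tpt t S (Suc (card S))}. F (switch_count S s) s)"
    using sum_consecutive_intervals[of "card S" "tpt t S"] tpt_mono[OF S] by simp
  also have "{tpt t S 0..<tpt t S (Suc (card S))} = {1..t}" by (auto simp: tpt_def)
  finally show ?thesis .
qed

lemma tpt_segment_exists:
  assumes "s \<in> {1..t}"
  obtains c where "c \<le> card S" "tpt t S c \<le> s" "s < tpt t S (c + 1)"
proof -
  define c where "c = (LEAST c. c \<le> card S \<and> s < tpt t S (c + 1))"
  have ex: "\<exists>c. c \<le> card S \<and> s < tpt t S (c + 1)"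
    using assms by (intro exI[of _ "card S"]) (simp add: tpt_def)
  have c: "c \<le> card S" "s < tpt t S (c + 1)"
    using LeastI_ex[OF ex] unfolding c_def by auto
  have "tpt t S c \<le> s"
  proof (cases "c = 0")
    case False
    then have "\<not> (c - 1 \<le> card S \<and> s < tpt t S (c - 1 + 1))"
      using not_less_Least[of "c - 1" "\<lambda>c. c \<le> card S \<and> s < tpt t S (c + 1)"]
      unfolding c_def[symmetric] by simp
    then have "\<not> s < tpt t S c" using c False by simp
    then show ?thesis by simp
  qed (use assms in \<open>simp add: tpt_def\<close>)
  then show ?thesis using c that by blast
qed

lemma Abar_eq_sum_tau:
  assumes S: "S \<subseteq> {2..t}"
  shows "Abar N A ll t S = (\<Sum>s=1..t. ebar N (A (map ll [tau s S..<s])) (ll s))"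
proof -
  have "Abar N A ll t S
      = (\<Sum>s=1..t. ebar N (A (map ll [tpt t S (switch_count S s)..<s])) (ll s))"
    unfolding Abar_def by (rule sum_segments_eq_sum_switch_count[OF S])
  also have "\<dots> = (\<Sum>s=1..t. ebar N (A (map ll [tau s S..<s])) (ll s))"
  proof (rule sum.cong[OF refl])
    fix s assume "s \<in> {1..t}"
    then obtain c where "c \<le> card S" "tpt t S c \<le> s" "s < tpt t S (c + 1)"
      by (rule tpt_segment_exists)
    then show "ebar N (A (map ll [tpt t S (switch_count S s)..<s])) (ll s)
             = ebar N (A (map ll [tau s S..<s])) (ll s)"
      using tpt_segment[OF S] by simp
  qed
  finally show ?thesis .
qed

lemma meta_loss_eq_sum_switch_count:
  assumes "S \<subseteq> {2..n}"
  shows "meta_loss ll n S a = (\<Sum>t=1..n. ll t (a (switch_count S t)))"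
  unfolding meta_loss_def by (rule sum_segments_eq_sum_switch_count[OF assms])

lemma tau_facts:
  assumes "finite X"
  shows "tau t X \<in> insert 1 X" "1 \<le> tau t X" "1 \<le> t \<Longrightarrow> tau t X \<le> t"
    "\<And>x. x \<in> X \<Longrightarrow> x \<le> t \<Longrightarrow> x \<le> tau t X"
proof -
  have f: "finite (insert 1 {s\<in>X. s \<le> t})" using assms by simp
  have m: "tau t X \<in> insert 1 {s\<in>X. s \<le> t}" unfolding tau_def by (rule Max_in[OF f]) simp
  then show "tau t X \<in> insert 1 X" by auto
  show "1 \<le> tau t X" unfolding tau_def by (rule Max_ge[OF f]) simp
  show "1 \<le> t \<Longrightarrow> tau t X \<le> t" using m by auto
  show "\<And>x. x \<in> X \<Longrightarrow> x \<le> t \<Longrightarrow> x \<le> tau t X" unfolding tau_def by (intro Max_ge[OF f]) auto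
qed

lemma next_switch_facts:
  assumes "finite X"
  shows "next_switch X n s \<in> insert (n + 1) X"
    "\<And>x. x \<in> X \<Longrightarrow> s < x \<Longrightarrow> next_switch X n s \<le> x"
    "next_switch X n s \<le> n + 1" "s \<le> n \<Longrightarrow> s < next_switch X n s"
proof -
  have f: "finite (insert (n + 1) {x\<in>X. s < x})" using assms by simp
  have m: "next_switch X n s \<in> insert (n + 1) {x\<in>X. s < x}"
    unfolding next_switch_def by (rule Min_in[OF f]) simp
  then show "next_switch X n s \<in> insert (n + 1) X" by auto
  show "next_switch X n s \<le> n + 1" unfolding next_switch_def by (rule Min_le[OF f]) simp
  show "s \<le> n \<Longrightarrow> s < next_switch X n s" using m by auto
  show "\<And>x. x \<in> X \<Longrightarrow> s < x \<Longrightarrow> next_switch X n s \<le> x"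
    unfolding next_switch_def by (intro Min_le[OF f]) auto
qed

lemma tau_eq_iff_segment:
  assumes X: "X \<subseteq> {2..n}" and s: "s \<in> insert 1 X" and t: "1 \<le> t" "t \<le> n"
  shows "tau t X = s \<longleftrightarrow> s \<le> t \<and> t < next_switch X n s"
proof -
  have f: "finite X" using X finite_subset by blast
  note tf = tau_facts[OF f, where t = t] and nf = next_switch_facts[OF f, where n = n and s = s]
  show ?thesis
  proof
    assume e: "tau t X = s"
    have "s \<le> t" using tf(3) t e by simp
    moreover have "t < next_switch X n s"
    proof (rule ccontr)
      assume "\<not> t < next_switch X n s"
      then show False
        using nf(1) nf(4) \<open>s \<le> t\<close> t tf(4)[of "next_switch X n s"] e by force
    qed
    ultimately show "s \<le> t \<and> t < next_switch X n s" by simp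
  next
    assume seg: "s \<le> t \<and> t < next_switch X n s"
    have "s \<le> tau t X" using X s tf(2) tf(4) seg by auto
    moreover have "\<not> s < tau t X"
    proof
      assume gt: "s < tau t X"
      then have "tau t X \<in> X" using tf(1) tf(2) X s by auto
      then show False using nf(2) gt tf(3) t seg by force
    qed
    ultimately show "tau t X = s" by simp
  qed
qed

lemma sum_group_by_tau:
  assumes X: "X \<subseteq> {2..n}"
  shows "(\<Sum>t=1..n. G (tau t X) t) = (\<Sum>s\<in>insert 1 X. \<Sum>t\<in>{s..<next_switch X n s}. G s t)"
proof -
  have f: "finite X" using X finite_subset by blast
  have fiber: "{t \<in> {1..n}. tau t X = s} = {s..<next_switch X n s}" if s: "s \<in> insert 1 X" for s
  proof -
    have "1 \<le> s" using s X by auto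
    moreover have "next_switch X n s \<le> n + 1" by (rule next_switch_facts(3)[OF f])
    ultimately have "t \<in> {1..n} \<and> tau t X = s \<longleftrightarrow> t \<in> {s..<next_switch X n s}" for t
      using tau_eq_iff_segment[OF X s, of t] by (cases "1 \<le> t \<and> t \<le> n") auto
    then show ?thesis by blast
  qed
  have "(\<Sum>t=1..n. G (tau t X) t)
      = (\<Sum>s\<in>insert 1 X. \<Sum>t\<in>{t \<in> {1..n}. tau t X = s}. G (tau t X) t)"
    by (rule sum.group[symmetric]) (use f tau_facts[OF f] in auto)
  also have "\<dots> = (\<Sum>s\<in>insert 1 X. \<Sum>t\<in>{s..<next_switch X n s}. G s t)"
  proof (rule sum.cong[OF refl])
    fix s assume "s \<in> insert 1 X"
    from fiber[OF this] show "(\<Sum>t\<in>{t \<in> {1..n}. tau t X = s}. G (tau t X) t)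
        = (\<Sum>t\<in>{s..<next_switch X n s}. G s t)"
      by (intro sum.cong) auto
  qed
  finally show ?thesis .
qed

lemma segment_lengths_sum:
  assumes "S \<subseteq> {2..n}"
  shows "(\<Sum>s\<in>insert 1 S. real (next_switch S n s - s)) = real n"
  using sum_group_by_tau[OF assms, of "\<lambda>_ _. 1 :: real"] by simp

lemma switch_count_on_segment:
  assumes "S \<subseteq> X" "finite X" "s \<le> t" "t < next_switch X n s"
  shows "switch_count S t = switch_count S s"
proof -
  have "{x\<in>S. x \<le> t} = {x\<in>S. x \<le> s}"
    using next_switch_facts(2)[OF assms(2), of _ s n] assms by (force simp: not_le)
  then show ?thesis unfolding switch_count_def by simp
qed

lemma switch_count_le_card: "finite S \<Longrightarrow> switch_count S t \<le> card S"
  unfolding switch_count_def by (intro card_mono) auto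

section \<open>Prior weights of transition paths\<close>

definition zeta_tail :: "real \<Rightarrow> nat \<Rightarrow> real" where
  "zeta_tail \<epsilon> k = ZL1_inf \<epsilon> - ZL1 \<epsilon> k"

lemma zeta_tail_Suc: "zeta_tail \<epsilon> k = piL1 \<epsilon> (Suc k) + zeta_tail \<epsilon> (Suc k)"
  unfolding zeta_tail_def ZL1_def by simp

lemma piL1_pos: "1 \<le> j \<Longrightarrow> piL1 \<epsilon> j > 0"
  unfolding piL1_def by simp

lemma summable_piL1_shift:
  assumes "0 < \<epsilon>"
  shows "summable (\<lambda>j. piL1 \<epsilon> (j + k))"
proof -
  have "summable (\<lambda>j. real j powr (-(1 + \<epsilon>)))" using summable_real_powr_iff assms by simp
  then have "summable (piL1 \<epsilon>)" unfolding piL1_def by simp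
  then show ?thesis using summable_iff_shift[of "piL1 \<epsilon>" k] by simp
qed

lemma zeta_tail_eq_suminf:
  assumes "0 < \<epsilon>"
  shows "zeta_tail \<epsilon> k = (\<Sum>j. piL1 \<epsilon> (j + k + 1))"
proof -
  have ZL1: "ZL1 \<epsilon> k = (\<Sum>j<k. piL1 \<epsilon> (j + 1))"
    by (induction k) (simp_all add: ZL1_def)
  have "ZL1_inf \<epsilon> = (\<Sum>j. piL1 \<epsilon> (j + k + 1)) + (\<Sum>j<k. piL1 \<epsilon> (j + 1))"
    using suminf_split_initial_segment[OF summable_piL1_shift[OF assms, of 1], of k]
    by (simp add: ZL1_inf_def add.assoc)
  then show ?thesis unfolding zeta_tail_def ZL1 by simp
qed

lemma zeta_tail_pos:
  assumes "0 < \<epsilon>"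
  shows "zeta_tail \<epsilon> k > 0"
proof -
  have "summable (\<lambda>j. piL1 \<epsilon> (j + k + 1))"
    using summable_piL1_shift[OF assms, of "k + 1"] by (simp add: add.assoc)
  then have "0 < (\<Sum>j. piL1 \<epsilon> (j + k + 1))" by (rule suminf_pos) (simp add: piL1_pos)
  then show ?thesis using zeta_tail_eq_suminf[OF assms] by simp
qed

lemma powr_neg_diff_bounds:
  fixes x e :: real
  assumes "0 < x" "0 < e"
  shows "e * (x + 1) powr (-1 - e) \<le> x powr (-e) - (x + 1) powr (-e)"
    and "x powr (-e) - (x + 1) powr (-e) \<le> e * x powr (-1 - e)"
proof -
  have "\<forall>y. x \<le> y \<and> y \<le> x + 1 \<longrightarrow>
      ((\<lambda>y. y powr (-e)) has_real_derivative (-e) * y powr (-e - 1)) (at y)"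
    using assms by (auto intro!: derivative_eq_intros)
  then obtain z where z: "x < z" "z < x + 1"
    "(x + 1) powr (-e) - x powr (-e) = (x + 1 - x) * ((-e) * z powr (-e - 1))"
    using MVT2[of x "x + 1" "\<lambda>y. y powr (-e)" "\<lambda>y. (-e) * y powr (-e - 1)"] by auto
  have m: "-e - 1 = -1 - e" by simp
  have eq: "x powr (-e) - (x + 1) powr (-e) = e * z powr (-1 - e)"
    using z(3) unfolding m by (simp add: algebra_simps)
  have "(x + 1) powr (-1 - e) \<le> z powr (-1 - e)" "z powr (-1 - e) \<le> x powr (-1 - e)"
    using z assms by (auto intro!: powr_mono2')
  then show "e * (x + 1) powr (-1 - e) \<le> x powr (-e) - (x + 1) powr (-e)"
    and "x powr (-e) - (x + 1) powr (-e) \<le> e * x powr (-1 - e)"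
    unfolding eq using assms by simp_all
qed

lemma powr_neg_telescope_sums:
  assumes "0 < e" "0 < k"
  shows "(\<lambda>j. real (j + k) powr (-e) / e - real (Suc j + k) powr (-e) / e)
           sums (real k powr (-e) / e)"
proof -
  have "filterlim (\<lambda>j. real (j + k)) at_top sequentially"
    by (rule filterlim_compose[OF filterlim_real_sequentially filterlim_add_const_nat_at_top])
  then have "(\<lambda>j. real (j + k) powr (-e)) \<longlonglongrightarrow> 0"
    using assms by (intro tendsto_neg_powr) auto
  then have "(\<lambda>j. real (j + k) powr (-e) / e) \<longlonglongrightarrow> 0"
    using tendsto_divide_zero by blast
  from telescope_sums'[OF this] show ?thesis by simp
qed

text \<open>The tail \<open>\<Sum>\<^sub>j\<^sub>>\<^sub>k j\<^sup>-\<^sup>1\<^sup>-\<^sup>\<epsilon>\<close> is squeezed between the integrals of \<open>x\<^sup>-\<^sup>1\<^sup>-\<^sup>\<epsilon>\<close> over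
  \<open>[k, \<infinity>)\<close> and \<open>[k + 1, \<infinity>)\<close>, written as telescoping sums.\<close>

lemma zeta_tail_le:
  assumes "0 < \<epsilon>" "1 \<le> k"
  shows "zeta_tail \<epsilon> k \<le> real k powr (-\<epsilon>) / \<epsilon>"
proof -
  have t: "(\<lambda>j. real (j + k) powr (-\<epsilon>) / \<epsilon> - real (Suc j + k) powr (-\<epsilon>) / \<epsilon>)
             sums (real k powr (-\<epsilon>) / \<epsilon>)"
    using powr_neg_telescope_sums assms by simp
  have le: "piL1 \<epsilon> (j + k + 1) \<le> real (j + k) powr (-\<epsilon>) / \<epsilon> - real (Suc j + k) powr (-\<epsilon>) / \<epsilon>"
    for j
    using powr_neg_diff_bounds(1)[of "real (j + k)" \<epsilon>] assms
    by (simp add: piL1_def field_simps add_ac)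
  have "summable (\<lambda>j. piL1 \<epsilon> (j + k + 1))"
    using summable_piL1_shift[OF assms(1), of "k + 1"] by (simp add: add.assoc)
  then show ?thesis
    using suminf_le[OF le _ sums_summable[OF t]] sums_unique[OF t] zeta_tail_eq_suminf[OF assms(1)]
    by simp
qed

lemma zeta_tail_ge:
  assumes "0 < \<epsilon>"
  shows "real (k + 1) powr (-\<epsilon>) / \<epsilon> \<le> zeta_tail \<epsilon> k"
proof -
  have t: "(\<lambda>j. real (j + (k + 1)) powr (-\<epsilon>) / \<epsilon> - real (Suc j + (k + 1)) powr (-\<epsilon>) / \<epsilon>)
             sums (real (k + 1) powr (-\<epsilon>) / \<epsilon>)"
    using powr_neg_telescope_sums[of \<epsilon> "k + 1"] assms by simp
  have le: "real (j + (k + 1)) powr (-\<epsilon>) / \<epsilon> - real (Suc j + (k + 1)) powr (-\<epsilon>) / \<epsilon>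
              \<le> piL1 \<epsilon> (j + k + 1)" for j
    using powr_neg_diff_bounds(2)[of "real (j + k + 1)" \<epsilon>] assms
    by (simp add: piL1_def field_simps add_ac)
  have "summable (\<lambda>j. piL1 \<epsilon> (j + k + 1))"
    using summable_piL1_shift[OF assms(1), of "k + 1"] by (simp add: add.assoc)
  then show ?thesis
    using suminf_le[OF le sums_summable[OF t]] sums_unique[OF t] zeta_tail_eq_suminf[OF assms(1)]
    by simp
qed

lemma zeta_tail_0_le:
  assumes "0 < \<epsilon>"
  shows "zeta_tail \<epsilon> 0 \<le> (1 + \<epsilon>) / \<epsilon>"
proof -
  have "zeta_tail \<epsilon> 0 = 1 + zeta_tail \<epsilon> 1" using zeta_tail_Suc[of \<epsilon> 0] by (simp add: piL1_def)
  also have "\<dots> \<le> 1 + 1 / \<epsilon>" using zeta_tail_le[OF assms, of 1] by simp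
  finally show ?thesis using assms by (simp add: field_simps)
qed

lemma pL1_eq:
  assumes "2 \<le> s" "0 < \<epsilon>"
  shows "pL1 \<epsilon> s t' = piL1 \<epsilon> (s - 1) / zeta_tail \<epsilon> (s - 2)"
    and "1 - pL1 \<epsilon> s t' = zeta_tail \<epsilon> (s - 1) / zeta_tail \<epsilon> (s - 2)"
    and "0 < pL1 \<epsilon> s t'" "pL1 \<epsilon> s t' < 1"
proof -
  show p: "pL1 \<epsilon> s t' = piL1 \<epsilon> (s - 1) / zeta_tail \<epsilon> (s - 2)"
    unfolding pL1_def zeta_tail_def by simp
  have split: "zeta_tail \<epsilon> (s - 2) = piL1 \<epsilon> (s - 1) + zeta_tail \<epsilon> (s - 1)"
    using zeta_tail_Suc[of \<epsilon> "s - 2"] assms by (simp add: Suc_diff_Suc numeral_2_eq_2)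
  have "piL1 \<epsilon> (s - 1) > 0" "zeta_tail \<epsilon> (s - 1) > 0"
    using piL1_pos zeta_tail_pos assms by auto
  then show "1 - pL1 \<epsilon> s t' = zeta_tail \<epsilon> (s - 1) / zeta_tail \<epsilon> (s - 2)"
    and "0 < pL1 \<epsilon> s t'" "pL1 \<epsilon> s t' < 1"
    unfolding p split by (simp_all add: field_simps)
qed

lemma phatL1_bounds:
  assumes "0 < \<epsilon>" "2 \<le> s"
  shows "pL1 \<epsilon> s t' \<le> phatL1 g \<epsilon> s t'" "0 \<le> phatL1 g \<epsilon> s t'" "phatL1 g \<epsilon> s t' \<le> 1"
  using pL1_eq(3,4)[OF assms(2,1), of t'] unfolding phatL1_def hprune_def by auto

lemma tau_trunc: "u \<le> t \<Longrightarrow> tau u (trunc t S) = tau u S"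
  unfolding tau_def trunc_def by (rule arg_cong[where f = Max]) auto

lemma finite_paths: "finite (paths t)"
  by (simp add: paths_def)

lemma paths_0: "paths 0 = {{}}"
  by (auto simp: paths_def)

lemma markov_w_Suc:
  assumes "1 \<le> t"
  shows "markov_w p (Suc t) S = markov_w p t (trunc t S) *
     (if Suc t \<in> S then p (Suc t) (tau t (trunc t S)) else 1 - p (Suc t) (tau t (trunc t S)))"
proof -
  have "markov_w p t S = markov_w p t (trunc t S)"
    unfolding markov_w_def
  proof (intro prod.cong refl)
    fix s assume "s \<in> {2..t}"
    then have "s \<in> S \<longleftrightarrow> s \<in> trunc t S" "tau (s - 1) (trunc t S) = tau (s - 1) S"
      using tau_trunc[of "s - 1" t S] by (auto simp: trunc_def)
    then show "(if s \<in> S then p s (tau (s - 1) S) else 1 - p s (tau (s - 1) S))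
      = (if s \<in> trunc t S then p s (tau (s - 1) (trunc t S)) else 1 - p s (tau (s - 1) (trunc t S)))"
      by simp
  qed
  then show ?thesis
    using assms tau_trunc[of t t S] by (simp add: markov_w_def prod.cl_ivl_Suc)
qed

text \<open>Summing out the last step of the chain: the two extensions \<open>S\<^sub>0\<close> and
  \<open>insert (Suc t) S\<^sub>0\<close> of a path on \<open>{1..t}\<close> carry total weight \<open>markov_w p t S\<^sub>0\<close>.\<close>

lemma markov_w_marginal:
  "(\<Sum>S\<in>paths (Suc t). markov_w p (Suc t) S * G (trunc t S))
     = (\<Sum>S\<^sub>0\<in>paths t. markov_w p t S\<^sub>0 * G S\<^sub>0)"
proof (cases "t = 0")
  case True
  then show ?thesis by (simp add: paths_def markov_w_def trunc_def)
next
  case False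
  have img: "trunc t ` paths (Suc t) \<subseteq> paths t" by (auto simp: paths_def trunc_def)
  have fiber: "(\<Sum>S\<in>{S \<in> paths (Suc t). trunc t S = S\<^sub>0}. markov_w p (Suc t) S * G (trunc t S))
      = markov_w p t S\<^sub>0 * G S\<^sub>0" if S\<^sub>0: "S\<^sub>0 \<in> paths t" for S\<^sub>0
  proof -
    have nin: "Suc t \<notin> S\<^sub>0" using S\<^sub>0 by (auto simp: paths_def)
    have tr: "trunc t S\<^sub>0 = S\<^sub>0" "trunc t (insert (Suc t) S\<^sub>0) = S\<^sub>0"
      using S\<^sub>0 by (auto simp: trunc_def paths_def)
    have "{S \<in> paths (Suc t). trunc t S = S\<^sub>0} = {S\<^sub>0, insert (Suc t) S\<^sub>0}"
      using S\<^sub>0 False by (auto simp: paths_def trunc_def le_Suc_eq)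
    moreover have "markov_w p (Suc t) S\<^sub>0 + markov_w p (Suc t) (insert (Suc t) S\<^sub>0) = markov_w p t S\<^sub>0"
      using markov_w_Suc[of t p S\<^sub>0] markov_w_Suc[of t p "insert (Suc t) S\<^sub>0"] False nin tr
      by (simp add: algebra_simps)
    moreover have "S\<^sub>0 \<noteq> insert (Suc t) S\<^sub>0" using nin by auto
    ultimately show ?thesis using tr by (simp add: distrib_right[symmetric])
  qed
  have "(\<Sum>S\<in>paths (Suc t). markov_w p (Suc t) S * G (trunc t S))
      = (\<Sum>S\<^sub>0\<in>paths t. \<Sum>S\<in>{S \<in> paths (Suc t). trunc t S = S\<^sub>0}. markov_w p (Suc t) S * G (trunc t S))"
    by (rule sum.group[OF finite_paths finite_paths img, symmetric])
  also have "\<dots> = (\<Sum>S\<^sub>0\<in>paths t. markov_w p t S\<^sub>0 * G S\<^sub>0)"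
    by (rule sum.cong[OF refl]) (rule fiber)
  finally show ?thesis .
qed

lemma markov_w_sum_eq_1: "(\<Sum>S\<in>paths t. markov_w p t S) = 1"
proof (induction t)
  case 0
  then show ?case by (simp add: paths_0 markov_w_def)
next
  case (Suc t)
  then show ?case using markov_w_marginal[of p t "\<lambda>_. 1"] by simp
qed

definition switch_probs :: "(nat \<Rightarrow> nat \<Rightarrow> real) \<Rightarrow> bool" where
  "switch_probs p \<longleftrightarrow> (\<forall>s t'. 2 \<le> s \<longrightarrow> 0 \<le> p s t' \<and> p s t' \<le> 1)"

lemma phatL1_switch_probs: "0 < \<epsilon> \<Longrightarrow> switch_probs (phatL1 g \<epsilon>)"
  unfolding switch_probs_def using phatL1_bounds(2,3) by blast

lemma markov_w_nonneg: "switch_probs p \<Longrightarrow> 0 \<le> markov_w p t S"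
  unfolding markov_w_def switch_probs_def by (intro prod_nonneg) auto

lemma switch_ratio_ge:
  assumes "0 < \<epsilon>" "2 \<le> s" "s \<le> n"
  shows "\<epsilon> / n \<le> piL1 \<epsilon> (s - 1) / zeta_tail \<epsilon> (s - 1)"
proof -
  define x where "x = real (s - 1)"
  have x: "1 \<le> x" "x \<le> n" using assms unfolding x_def by auto
  have "-(1 + \<epsilon>) = -\<epsilon> + (-1)" by simp
  then have "x powr (-(1 + \<epsilon>)) = x powr (-\<epsilon>) * x powr (-1)" by (metis powr_add)
  also have "x powr (-1) = 1 / x" using x by (simp add: powr_neg_one)
  finally have pi: "piL1 \<epsilon> (s - 1) = x powr (-\<epsilon>) / x"
    unfolding piL1_def x_def[symmetric] by simp
  have "\<epsilon> / n \<le> \<epsilon> / x" using x assms by (intro divide_left_mono) auto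
  also have "\<dots> = (x powr (-\<epsilon>) / x) / (x powr (-\<epsilon>) / \<epsilon>)" using x assms by (simp add: field_simps)
  also have "\<dots> \<le> (x powr (-\<epsilon>) / x) / zeta_tail \<epsilon> (s - 1)"
    using zeta_tail_le[OF assms(1), of "s - 1"] zeta_tail_pos[OF assms(1), of "s - 1"] x assms
    by (intro divide_left_mono) (auto simp: x_def)
  finally show ?thesis unfolding pi .
qed

lemma prod_zeta_tail_ratio_ge:
  assumes "0 < \<epsilon>" "1 \<le> n"
  shows "real n powr (-\<epsilon>) / (1 + \<epsilon>) \<le> (\<Prod>s=2..n. zeta_tail \<epsilon> (s - 1) / zeta_tail \<epsilon> (s - 2))"
proof -
  have tpos: "zeta_tail \<epsilon> k > 0" for k using zeta_tail_pos[OF assms(1)] .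
  have "(\<Prod>s=Suc 1..n. zeta_tail \<epsilon> (s - 1) / zeta_tail \<epsilon> (s - 1 - 1))
      = zeta_tail \<epsilon> (n - 1) / zeta_tail \<epsilon> (1 - 1)"
    using tpos by (intro prod_telescope''[OF assms(2)]) (metis less_irrefl)
  then have telescope: "(\<Prod>s=2..n. zeta_tail \<epsilon> (s - 1) / zeta_tail \<epsilon> (s - 2))
      = zeta_tail \<epsilon> (n - 1) / zeta_tail \<epsilon> 0"
    by (simp add: numeral_2_eq_2 diff_diff_add)
  have "real n powr (-\<epsilon>) / (1 + \<epsilon>) = (real n powr (-\<epsilon>) / \<epsilon>) / ((1 + \<epsilon>) / \<epsilon>)"
    using assms by (simp add: field_simps)
  also have "\<dots> \<le> zeta_tail \<epsilon> (n - 1) / ((1 + \<epsilon>) / \<epsilon>)"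
    using zeta_tail_ge[OF assms(1), of "n - 1"] assms by (intro divide_right_mono) auto
  also have "\<dots> \<le> zeta_tail \<epsilon> (n - 1) / zeta_tail \<epsilon> 0"
    using zeta_tail_0_le[OF assms(1)] tpos[of 0] tpos[of "n - 1"] assms(1)
    by (intro divide_left_mono) auto
  finally show ?thesis unfolding telescope .
qed

text \<open>A path \<open>T\<close> whose non-switch steps are never overridden by pruning keeps the unpruned
  factors: \<open>p(s|\<cdot>) \<ge> (\<epsilon>/n) R(s)\<close> at switches and \<open>1 - p(s|\<cdot>) = R(s)\<close> elsewhere, where
  \<open>R(s) = zeta_tail(s-1)/zeta_tail(s-2)\<close> telescopes.\<close>

lemma whatL1_ge:
  assumes e: "0 < \<epsilon>" and n: "1 \<le> n" and T: "T \<subseteq> {2..n}"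
    and unpruned: "\<forall>s\<in>{2..n}. s \<notin> T \<longrightarrow> hprune g s (tau (s - 1) T) = 1"
  shows "(\<epsilon> / n) ^ card T * (real n powr (-\<epsilon>) / (1 + \<epsilon>)) \<le> whatL1 g \<epsilon> n T"
proof -
  define r where "r s = piL1 \<epsilon> (s - 1) / zeta_tail \<epsilon> (s - 1)" for s
  define R where "R s = zeta_tail \<epsilon> (s - 1) / zeta_tail \<epsilon> (s - 2)" for s
  define F where "F s = (if s \<in> T then phatL1 g \<epsilon> s (tau (s - 1) T)
                         else 1 - phatL1 g \<epsilon> s (tau (s - 1) T))" for s
  have tpos: "zeta_tail \<epsilon> k > 0" for k using zeta_tail_pos[OF e] .
  have factor: "(if s \<in> T then r s else 1) * R s \<le> F s" if s: "s \<in> {2..n}" for s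
  proof (cases "s \<in> T")
    case True
    have "r s * R s = pL1 \<epsilon> s (tau (s - 1) T)"
      using pL1_eq(1)[of s \<epsilon>] s e tpos[of "s - 1"] by (simp add: r_def R_def)
    then show ?thesis using True phatL1_bounds(1)[OF e] s unfolding F_def by simp
  next
    case False
    then show ?thesis
      using unpruned s pL1_eq(2)[of s \<epsilon>] e by (simp add: F_def R_def phatL1_def)
  qed
  have "(\<epsilon> / n) ^ card T * (real n powr (-\<epsilon>) / (1 + \<epsilon>))
      \<le> (\<Prod>s\<in>T. r s) * (\<Prod>s=2..n. R s)"
  proof (rule mult_mono)
    have "(\<Prod>s\<in>T. \<epsilon> / n) \<le> (\<Prod>s\<in>T. r s)"
      using T e n switch_ratio_ge unfolding r_def by (intro prod_mono) force
    then show "(\<epsilon> / n) ^ card T \<le> (\<Prod>s\<in>T. r s)" by simp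
    show "real n powr (-\<epsilon>) / (1 + \<epsilon>) \<le> (\<Prod>s=2..n. R s)"
      unfolding R_def by (rule prod_zeta_tail_ratio_ge[OF e n])
    show "0 \<le> (\<Prod>s\<in>T. r s)"
      using T tpos piL1_pos by (intro prod_nonneg) (force simp: r_def less_imp_le)
  qed (use e in simp)
  also have "(\<Prod>s\<in>T. r s) = (\<Prod>s=2..n. if s \<in> T then r s else 1)"
    using T by (simp add: prod.If_cases Int_absorb1)
  also have "\<dots> * (\<Prod>s=2..n. R s) = (\<Prod>s=2..n. (if s \<in> T then r s else 1) * R s)"
    by (simp add: prod.distrib)
  also have "\<dots> \<le> (\<Prod>s=2..n. F s)"
    using factor tpos piL1_pos
    by (intro prod_mono) (force simp: r_def R_def less_imp_le)
  also have "\<dots> = whatL1 g \<epsilon> n T" by (simp add: whatL1_def markov_w_def F_def)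
  finally show ?thesis .
qed

lemma ln_inverse_whatL1_le:
  assumes e: "0 < \<epsilon>" and n: "1 \<le> n" and T: "T \<subseteq> {2..n}"
    and unpruned: "\<forall>s\<in>{2..n}. s \<notin> T \<longrightarrow> hprune g s (tau (s - 1) T) = 1"
  shows "0 < whatL1 g \<epsilon> n T" "ln (1 / whatL1 g \<epsilon> n T) \<le> r_n \<epsilon> n (card T)"
proof -
  define B where "B = (\<epsilon> / n) ^ card T * (real n powr (-\<epsilon>) / (1 + \<epsilon>))"
  have B: "0 < B" "B \<le> whatL1 g \<epsilon> n T"
    using whatL1_ge[OF assms] e n unfolding B_def by simp_all
  then show "0 < whatL1 g \<epsilon> n T" by linarith
  have "ln (1 / whatL1 g \<epsilon> n T) \<le> - ln B" using B by (simp add: ln_div)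
  also have "- ln B = r_n \<epsilon> n (card T)"
    using e n by (simp add: B_def r_n_def ln_mult ln_div ln_realpow ln_powr algebra_simps)
  finally show "ln (1 / whatL1 g \<epsilon> n T) \<le> r_n \<epsilon> n (card T)" .
qed

section \<open>Refining a path by dyadic points\<close>

definition next_multiple :: "nat \<Rightarrow> nat \<Rightarrow> nat" where
  "next_multiple j a = (a div 2 ^ j + 1) * 2 ^ j"

text \<open>\<open>dyadic_pt k a i\<close> is the first point after \<open>a\<close> divisible by \<open>2\<^sup>u\<^sup>+\<^sup>i\<^sup>k\<close>, where
  \<open>2\<^sup>u\<close> is the largest power of two dividing \<open>a\<close>: each point is protected by the pruning rule
  for \<open>g 2\<^sup>u\<^sup>+\<^sup>i\<^sup>k\<close> steps, which reaches the next point when \<open>2\<^sup>k - 1 \<le> g\<close>.\<close>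

definition dyadic_pt :: "nat \<Rightarrow> nat \<Rightarrow> nat \<Rightarrow> nat" where
  "dyadic_pt k a i = (if i = 0 then a else next_multiple (multiplicity 2 a + i * k) a)"

definition refinement_pts :: "nat \<Rightarrow> nat \<Rightarrow> nat \<Rightarrow> nat set" where
  "refinement_pts k a b = dyadic_pt k a ` {1..} \<inter> {a<..<b}"

definition refine_path :: "nat \<Rightarrow> nat \<Rightarrow> nat set \<Rightarrow> nat set" where
  "refine_path k n S = S \<union> (\<Union>s\<in>insert 1 S. refinement_pts k s (next_switch S n s))"

lemma less_next_multiple: "a < next_multiple j a"
proof -
  have "a = a div 2 ^ j * 2 ^ j + a mod 2 ^ j" by (rule div_mult_mod_eq[symmetric])
  moreover have "a mod 2 ^ j < 2 ^ j" by simp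
  moreover have "(a div 2 ^ j + 1) * 2 ^ j = a div 2 ^ j * 2 ^ j + 2 ^ j" by (simp add: algebra_simps)
  ultimately show ?thesis unfolding next_multiple_def by linarith
qed

lemma dvd_next_multiple: "2 ^ j dvd next_multiple j a"
  unfolding next_multiple_def by simp

lemma next_multiple_le:
  assumes "2 ^ j dvd x" "a < x"
  shows "next_multiple j a \<le> x"
proof -
  obtain q where q: "x = q * 2 ^ j" using assms(1) by (metis dvd_def mult.commute)
  have "a div 2 ^ j < q"
  proof (rule ccontr)
    assume "\<not> a div 2 ^ j < q"
    then have "q * 2 ^ j \<le> a div 2 ^ j * 2 ^ j" by simp
    also have "\<dots> \<le> a" by (simp add: div_times_less_eq_dividend)
    finally show False using assms q by simp
  qed
  then show ?thesis unfolding next_multiple_def q by (intro mult_le_mono1) simp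
qed

lemma next_multiple_mono:
  assumes "j \<le> j'"
  shows "next_multiple j a \<le> next_multiple j' a"
proof (rule next_multiple_le)
  show "2 ^ j dvd next_multiple j' a"
    using dvd_next_multiple[of j' a] assms by (meson dvd_trans le_imp_power_dvd)
qed (rule less_next_multiple)

lemma dvd_gap:
  fixes d y z :: nat
  assumes "d dvd y" "d dvd z" "z < y"
  shows "z + d \<le> y"
proof -
  obtain q1 q2 where q: "y = d * q1" "z = d * q2" using assms(1,2) by (auto elim!: dvdE)
  then have "Suc q2 \<le> q1" using assms(3) by (simp add: Suc_le_eq mult_less_cancel1)
  then have "d * Suc q2 \<le> d * q1" by (rule mult_le_mono2)
  then show ?thesis using q by simp
qed

lemma round_up_to_multiple:
  assumes "2 ^ j dvd (c::nat)"
  obtains y where "2 ^ (j + k) dvd y" "c \<le> y" "y \<le> c + (2 ^ k - 1) * 2 ^ j"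
proof -
  obtain q where q: "c = q * 2 ^ j" using assms by (metis dvd_def mult.commute)
  define K where "K = (2::nat) ^ k"
  have K: "K \<ge> 1" unfolding K_def by simp
  define r where "r = (q + K - 1) div K"
  have "q + K - 1 = r * K + (q + K - 1) mod K" "(q + K - 1) mod K < K"
    using K unfolding r_def by simp_all
  then have r1: "q \<le> r * K" by linarith
  have r2: "r * K \<le> q + K - 1" unfolding r_def by (simp add: div_times_less_eq_dividend)
  show ?thesis
  proof
    show "2 ^ (j + k) dvd r * K * 2 ^ j" unfolding K_def by (simp add: power_add mult.commute)
    show "c \<le> r * K * 2 ^ j" unfolding q using r1 by simp
    have "r * K * 2 ^ j \<le> (q + K - 1) * 2 ^ j" using r2 by simp
    also have "\<dots> = c + (2 ^ k - 1) * 2 ^ j" unfolding q K_def using K K_def by (simp add: algebra_simps)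
    finally show "r * K * 2 ^ j \<le> c + (2 ^ k - 1) * 2 ^ j" .
  qed
qed

lemma next_multiple_add_le:
  assumes "2 ^ j dvd c" "a \<le> c" "a < c \<or> \<not> 2 ^ (j + k) dvd a"
  shows "next_multiple (j + k) a \<le> c + (2 ^ k - 1) * 2 ^ j"
proof -
  obtain y where y: "2 ^ (j + k) dvd y" "c \<le> y" "y \<le> c + (2 ^ k - 1) * 2 ^ j"
    using round_up_to_multiple[OF assms(1)] .
  then have "a < y" using assms(2,3) by (cases "y = a") auto
  then have "next_multiple (j + k) a \<le> y" by (rule next_multiple_le[OF y(1)])
  then show ?thesis using y(3) by (rule order_trans)
qed

lemma dvd_dyadic_pt: "2 ^ (multiplicity 2 a + i * k) dvd dyadic_pt k a i"
  by (simp add: dyadic_pt_def multiplicity_dvd dvd_next_multiple)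

lemma less_dyadic_pt: "0 < i \<Longrightarrow> a < dyadic_pt k a i"
  by (simp add: dyadic_pt_def less_next_multiple)

lemma dyadic_pt_mono:
  assumes "i \<le> j"
  shows "dyadic_pt k a i \<le> dyadic_pt k a j"
proof (cases "i = 0")
  case True
  then show ?thesis using less_next_multiple[of a] by (simp add: dyadic_pt_def less_imp_le)
next
  case False
  then show ?thesis
    using assms next_multiple_mono[of "multiplicity 2 a + i * k" "multiplicity 2 a + j * k" a]
    by (simp add: dyadic_pt_def)
qed

lemma level_le_multiplicity_dyadic_pt:
  assumes "0 < a"
  shows "multiplicity 2 a + i * k \<le> multiplicity 2 (dyadic_pt k a i)"
proof -
  have "dyadic_pt k a i \<noteq> 0" using assms less_dyadic_pt[of i a k] by (cases "i = 0") (auto simp: dyadic_pt_def)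
  then show ?thesis using dvd_dyadic_pt[of a i k] by (simp add: power_dvd_iff_le_multiplicity)
qed

lemma dyadic_pt_Suc_le:
  assumes "0 < a" "1 \<le> k"
  shows "dyadic_pt k a (Suc i) \<le> dyadic_pt k a i + (2 ^ k - 1) * 2 ^ (multiplicity 2 a + i * k)"
proof -
  have "a < dyadic_pt k a i \<or> \<not> 2 ^ (multiplicity 2 a + i * k + k) dvd dyadic_pt k a i"
  proof (cases "i = 0")
    case True
    then show ?thesis using assms by (simp add: dyadic_pt_def power_dvd_iff_le_multiplicity)
  qed (simp add: less_dyadic_pt)
  then have "next_multiple (multiplicity 2 a + i * k + k) a
      \<le> dyadic_pt k a i + (2 ^ k - 1) * 2 ^ (multiplicity 2 a + i * k)"
    using dyadic_pt_mono[of 0 i k a]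
    by (intro next_multiple_add_le dvd_dyadic_pt) (auto simp: dyadic_pt_def)
  moreover have "dyadic_pt k a (Suc i) = next_multiple (multiplicity 2 a + i * k + k) a"
    by (simp add: dyadic_pt_def algebra_simps)
  ultimately show ?thesis by simp
qed

lemma dyadic_pt_gap:
  assumes "dyadic_pt k a i < dyadic_pt k a (Suc i)"
  shows "dyadic_pt k a i + 2 ^ (multiplicity 2 a + i * k) \<le> dyadic_pt k a (Suc i)"
proof (rule dvd_gap[OF _ dvd_dyadic_pt assms])
  show "2 ^ (multiplicity 2 a + i * k) dvd dyadic_pt k a (Suc i)"
    using dvd_trans[OF le_imp_power_dvd dvd_dyadic_pt[of a "Suc i" k],
                    of "multiplicity 2 a + i * k"] by simp
qed

lemma finite_dyadic_pts_le:
  assumes "0 < a" "1 \<le> k"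
  shows "finite {i. dyadic_pt k a i \<le> t}"
proof (rule finite_subset[of _ "{..t}"])
  have lt: "i < dyadic_pt k a i" for i
  proof (cases "i = 0")
    case False
    have "i * 1 \<le> i * k" using assms(2) by (rule mult_le_mono2)
    then have "i \<le> multiplicity 2 a + i * k" by linarith
    then have "(2::nat) ^ i \<le> 2 ^ (multiplicity 2 a + i * k)" by (intro power_increasing) auto
    then have "i < 2 ^ (multiplicity 2 a + i * k)" using less_exp[of i] by linarith
    also have "\<dots> \<le> dyadic_pt k a i"
      using dvd_dyadic_pt[of a i k] less_dyadic_pt[of i a k] False by (intro dvd_imp_le) auto
    finally show ?thesis .
  qed (use assms in \<open>simp add: dyadic_pt_def\<close>)
  show "{i. dyadic_pt k a i \<le> t} \<subseteq> {..t}"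
  proof
    fix i assume "i \<in> {i. dyadic_pt k a i \<le> t}"
    then show "i \<in> {..t}" using lt[of i] by simp
  qed
qed simp

lemma refine_path_facts:
  assumes "S \<subseteq> {2..n}"
  shows "refine_path k n S \<subseteq> {2..n}" "S \<subseteq> refine_path k n S" "finite (refine_path k n S)"
proof -
  have f: "finite S" using assms finite_subset by blast
  have "refinement_pts k s (next_switch S n s) \<subseteq> {2..n}" if "s \<in> insert 1 S" for s
    using that assms next_switch_facts(3)[OF f, of n s] by (force simp: refinement_pts_def)
  then show "refine_path k n S \<subseteq> {2..n}" unfolding refine_path_def using assms by blast
  then show "finite (refine_path k n S)" using finite_subset by blast
  show "S \<subseteq> refine_path k n S" unfolding refine_path_def by blast
qed

lemma refine_path_le_cases:
  assumes S: "S \<subseteq> {2..n}" and t: "1 \<le> t" "t \<le> n"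
    and x: "x \<in> refine_path k n S" "x \<le> t"
  shows "x \<le> tau t S \<or> x \<in> refinement_pts k (tau t S) (next_switch S n (tau t S))"
proof (cases "x \<in> S")
  case True
  have "finite S" using S finite_subset by blast
  then show ?thesis using tau_facts(4) True x(2) by blast
next
  case False
  have f: "finite S" using S finite_subset by blast
  define a where "a = tau t S"
  have a: "a \<in> insert 1 S" unfolding a_def using tau_facts(1)[OF f] .
  have seg: "a \<le> t" "t < next_switch S n a" using tau_eq_iff_segment[OF S a t] unfolding a_def by auto
  obtain s where s: "s \<in> insert 1 S" "x \<in> refinement_pts k s (next_switch S n s)"
    using x(1) False unfolding refine_path_def by blast
  have xs: "s < x" "x < next_switch S n s" using s(2) by (auto simp: refinement_pts_def)
  have "1 \<le> s" "1 \<le> a" using s(1) a S by auto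
  then consider "s = a" | "s < a" "a \<in> S" | "a < s" "s \<in> S"
    using s(1) a by (cases s a rule: linorder_cases) auto
  then show ?thesis
  proof cases
    case 2
    then have "next_switch S n s \<le> a" using next_switch_facts(2)[OF f, of a s n] by simp
    then show ?thesis using xs unfolding a_def by simp
  next
    case 3
    then show ?thesis using next_switch_facts(2)[OF f, of s a n] xs seg x(2) by simp
  qed (use s a_def in simp)
qed

lemma tau_notin: "t \<notin> T \<Longrightarrow> tau (t - 1) T = tau t T"
  unfolding tau_def by (rule arg_cong[where f = Max]) (auto simp: le_diff_conv2 le_eq_less_or_eq)

lemma tau_refine_path:
  assumes S: "S \<subseteq> {2..n}" and k: "1 \<le> k" and t: "1 \<le> t" "t \<le> n"
  defines "a \<equiv> tau t S"
  shows "tau t (refine_path k n S) = dyadic_pt k a (Max {i. dyadic_pt k a i \<le> t})"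
proof -
  have f: "finite S" using S finite_subset by blast
  define T where "T = refine_path k n S"
  define I where "I = {i. dyadic_pt k a i \<le> t}"
  define x where "x = dyadic_pt k a (Max I)"
  have a: "a \<in> insert 1 S" unfolding a_def using tau_facts(1)[OF f] .
  have a1: "1 \<le> a" using a S by auto
  have seg: "a \<le> t" "t < next_switch S n a" using tau_eq_iff_segment[OF S a t] by (auto simp: a_def)
  have I: "finite I" "0 \<in> I"
    using finite_dyadic_pts_le[of a k t] a1 k seg(1) by (simp_all add: I_def dyadic_pt_def)
  have xt: "x \<le> t" using Max_in[OF I(1)] I(2) by (auto simp: x_def I_def)
  have ax: "a \<le> x" using dyadic_pt_mono[of 0 "Max I" k a] by (simp add: x_def dyadic_pt_def)
  have "x \<in> insert 1 T"
  proof (cases "Max I = 0")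
    case True
    then show ?thesis using a refine_path_facts(2)[OF S] by (auto simp: x_def dyadic_pt_def T_def)
  next
    case False
    then have "x \<in> refinement_pts k a (next_switch S n a)"
      using xt seg less_dyadic_pt[of "Max I" a k] by (auto simp: refinement_pts_def x_def)
    then show ?thesis using a unfolding T_def refine_path_def by blast
  qed
  moreover have below: "y \<le> x" if y: "y \<in> T" "y \<le> t" for y
  proof -
    consider "y \<le> a" | j where "y = dyadic_pt k a j" "1 \<le> j"
      using refine_path_le_cases[OF S t y[unfolded T_def]] unfolding a_def[symmetric]
      by (auto simp: refinement_pts_def)
    then show ?thesis
    proof cases
      case (2 j)
      then have "j \<le> Max I" using Max_ge[OF I(1)] y(2) by (simp add: I_def)
      then show ?thesis unfolding 2 x_def by (rule dyadic_pt_mono)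
    qed (use ax in simp)
  qed
  ultimately have "tau t T = x"
    unfolding tau_def
  proof (intro Max_eqI)
    fix y assume "y \<in> insert 1 {s \<in> T. s \<le> t}"
    then show "y \<le> x" using below a1 ax by auto
  qed (use \<open>x \<in> insert 1 T\<close> xt f refine_path_facts(3)[OF S] in \<open>auto simp: T_def\<close>)
  then show ?thesis unfolding T_def x_def I_def .
qed

lemma refine_path_unpruned:
  assumes S: "S \<subseteq> {2..n}" and k: "1 \<le> k" "2 ^ k - 1 \<le> g"
    and t: "t \<in> {2..n}" "t \<notin> refine_path k n S"
  shows "hprune g t (tau (t - 1) (refine_path k n S)) = 1"
proof -
  have f: "finite S" using S finite_subset by blast
  define a where "a = tau t S"
  define i where "i = Max {i. dyadic_pt k a i \<le> t}"
  define x where "x = dyadic_pt k a i"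
  have a: "1 \<le> a" using tau_facts(2)[OF f] by (simp add: a_def)
  have tau: "tau (t - 1) (refine_path k n S) = x"
    using tau_notin[OF t(2)] tau_refine_path[OF S k(1), of t] t by (simp add: x_def i_def a_def)
  have fin: "finite {i. dyadic_pt k a i \<le> t}" using finite_dyadic_pts_le a k by simp
  have "dyadic_pt k a 0 \<le> t" using tau_facts(3)[OF f, of t] t by (simp add: dyadic_pt_def a_def)
  then have xt: "x \<le> t" using Max_in[OF fin] by (auto simp: x_def i_def)
  have "\<not> dyadic_pt k a (Suc i) \<le> t" using Max_ge[OF fin, of "Suc i"] unfolding i_def by auto
  then have "t < dyadic_pt k a (Suc i)" by simp
  also have "\<dots> \<le> x + (2 ^ k - 1) * 2 ^ (multiplicity 2 a + i * k)"
    using dyadic_pt_Suc_le a k by (simp add: x_def)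
  also have "\<dots> \<le> x + g * 2 ^ multiplicity 2 x"
  proof -
    have "multiplicity 2 a + i * k \<le> multiplicity 2 x"
      using level_le_multiplicity_dyadic_pt[of a i k] a by (simp add: x_def)
    then have "(2::nat) ^ (multiplicity 2 a + i * k) \<le> 2 ^ multiplicity 2 x"
      by (rule power_increasing) simp
    with k(2) show ?thesis by (intro add_left_mono mult_le_mono)
  qed
  finally show ?thesis using xt tau by (simp add: hprune_def)
qed

lemma dyadic_jump_index_le:
  assumes k: "1 \<le> k" and i: "1 \<le> i" and jump: "dyadic_pt k a (i - 1) < dyadic_pt k a i"
    and b: "dyadic_pt k a i < b"
  shows "int i \<le> \<lceil>log 2 (real (b - a)) / real k\<rceil>"
proof -
  have si: "Suc (i - 1) = i" using i by simp
  have "dyadic_pt k a (i - 1) + 2 ^ (multiplicity 2 a + (i - 1) * k) \<le> dyadic_pt k a i"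
    using dyadic_pt_gap[of k a "i - 1"] jump unfolding si by simp
  moreover have "a \<le> dyadic_pt k a (i - 1)" using dyadic_pt_mono[of 0 "i - 1" k a] by (simp add: dyadic_pt_def)
  moreover have "(2::nat) ^ ((i - 1) * k) \<le> 2 ^ (multiplicity 2 a + (i - 1) * k)"
    by (rule power_increasing) simp_all
  ultimately have "2 ^ ((i - 1) * k) < b - a" using b by linarith
  then have "real ((i - 1) * k) < log 2 (real (b - a))" by (rule less_log2_of_power)
  then have "real (i - 1) < log 2 (real (b - a)) / real k" using k by (simp add: field_simps)
  also have "\<dots> \<le> of_int \<lceil>log 2 (real (b - a)) / real k\<rceil>" by (rule le_of_int_ceiling)
  finally have "int (i - 1) < \<lceil>log 2 (real (b - a)) / real k\<rceil>" by linarith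
  then show ?thesis using i by linarith
qed

text \<open>Consecutive distinct dyadic points after \<open>a\<close> are \<open>2\<^sup>u\<^sup>+\<^sup>i\<^sup>k\<close> apart, so only about
  \<open>log (b - a) / k\<close> of them fit before \<open>b\<close>.\<close>

lemma card_refinement_pts_le:
  assumes k: "1 \<le> k" and a: "0 < a" "a < b"
  shows "real (card (refinement_pts k a b)) \<le> of_int \<lceil>log 2 (real (b - a)) / real k\<rceil>"
proof -
  define M where "M = nat \<lceil>log 2 (real (b - a)) / real k\<rceil>"
  have "refinement_pts k a b \<subseteq> dyadic_pt k a ` {1..M}"
  proof
    fix y assume y: "y \<in> refinement_pts k a b"
    then have ex: "\<exists>i. 1 \<le> i \<and> y = dyadic_pt k a i" and yb: "y < b"
      by (auto simp: refinement_pts_def)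
    define i where "i = (LEAST i. 1 \<le> i \<and> y = dyadic_pt k a i)"
    have i: "1 \<le> i" "y = dyadic_pt k a i" using LeastI_ex[OF ex] unfolding i_def by auto
    have "dyadic_pt k a (i - 1) \<noteq> y"
    proof
      assume eq: "dyadic_pt k a (i - 1) = y"
      show False
      proof (cases "i = 1")
        case True
        then show False using eq i less_dyadic_pt[of i a k] by (simp add: dyadic_pt_def)
      next
        case False
        then have "1 \<le> i - 1 \<and> y = dyadic_pt k a (i - 1)" using eq i by simp
        then have "i \<le> i - 1" unfolding i_def by (rule Least_le)
        then show False using False i by simp
      qed
    qed
    then have "dyadic_pt k a (i - 1) < dyadic_pt k a i"
      using dyadic_pt_mono[of "i - 1" i k a] i(2) by simp
    then have "int i \<le> \<lceil>log 2 (real (b - a)) / real k\<rceil>"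
      using dyadic_jump_index_le[OF k i(1)] yb i(2) by simp
    then have "i \<le> M" unfolding M_def using nat_mono by fastforce
    then show "y \<in> dyadic_pt k a ` {1..M}" using i by auto
  qed
  then have "card (refinement_pts k a b) \<le> card (dyadic_pt k a ` {1..M})"
    by (intro card_mono) simp_all
  also have "\<dots> \<le> M" using card_image_le[of "{1..M}" "dyadic_pt k a"] by simp
  finally have "card (refinement_pts k a b) \<le> M" .
  moreover have "0 \<le> log 2 (real (b - a)) / real k" using a by simp
  ultimately show ?thesis unfolding M_def by linarith
qed

lemma floor_log2_facts:
  assumes "1 \<le> g"
  defines "k \<equiv> nat \<lfloor>log 2 (real g + 1)\<rfloor>"
  shows "1 \<le> k" "real k = real_of_int \<lfloor>log 2 (real g + 1)\<rfloor>" "2 ^ k - 1 \<le> g"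
proof -
  have "log 2 2 \<le> log 2 (real g + 1)" using assms by (subst log_le_cancel_iff) auto
  then have f1: "1 \<le> \<lfloor>log 2 (real g + 1)\<rfloor>" by simp
  then show "1 \<le> k" unfolding k_def by linarith
  show k: "real k = real_of_int \<lfloor>log 2 (real g + 1)\<rfloor>" unfolding k_def using f1 by simp
  have "real k \<le> log 2 (real g + 1)" unfolding k by simp
  then have "(2::real) powr real k \<le> 2 powr log 2 (real g + 1)" by (intro powr_mono) auto
  then have "real (2 ^ k) \<le> real (g + 1)" by (simp add: powr_realpow)
  then show "2 ^ k - 1 \<le> g" by (simp only: of_nat_le_iff)
qed

lemma sum_ceiling_log_le:
  fixes m :: "'a \<Rightarrow> nat"
  assumes "finite A" "A \<noteq> {}" "\<And>s. s \<in> A \<Longrightarrow> 0 < m s" "0 < k"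
  shows "(\<Sum>s\<in>A. of_int \<lceil>log 2 (real (m s)) / k\<rceil>)
           \<le> card A * log 2 ((\<Sum>s\<in>A. real (m s)) / card A) / k + card A"
proof -
  have "(\<Sum>s\<in>A. of_int \<lceil>log 2 (real (m s)) / k\<rceil>) \<le> (\<Sum>s\<in>A. log 2 (real (m s)) / k + 1)"
    by (intro sum_mono) (rule of_int_ceiling_le_add_one)
  also have "\<dots> = (\<Sum>s\<in>A. log 2 (real (m s))) / k + card A"
    by (simp add: sum.distrib sum_divide_distrib)
  also have "(\<Sum>s\<in>A. log 2 (real (m s))) \<le> card A * log 2 ((\<Sum>s\<in>A. real (m s)) / card A)"
    using assms by (intro concave_sum_le_card_mult_mean[OF log_concave]) auto
  finally show ?thesis using assms(4) by (simp add: divide_right_mono)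
qed

lemma card_refine_path_le_sum:
  assumes S: "S \<subseteq> {2..n}" and n: "1 \<le> n" and k: "1 \<le> k"
  shows "real (card (refine_path k n S))
    \<le> real (card S) + (\<Sum>s\<in>insert 1 S. of_int \<lceil>log 2 (real (next_switch S n s - s)) / real k\<rceil>)"
proof -
  have f: "finite S" using S finite_subset by blast
  have "card (refine_path k n S)
      \<le> card S + card (\<Union>s\<in>insert 1 S. refinement_pts k s (next_switch S n s))"
    unfolding refine_path_def by (rule card_Un_le)
  also have "\<dots> \<le> card S + (\<Sum>s\<in>insert 1 S. card (refinement_pts k s (next_switch S n s)))"
    using f by (intro add_left_mono card_UN_le) simp
  finally have "real (card (refine_path k n S))
      \<le> real (card S) + (\<Sum>s\<in>insert 1 S. real (card (refinement_pts k s (next_switch S n s))))"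
    by (metis of_nat_add of_nat_le_iff of_nat_sum)
  also have "\<dots> \<le> real (card S)
      + (\<Sum>s\<in>insert 1 S. of_int \<lceil>log 2 (real (next_switch S n s - s)) / real k\<rceil>)"
  proof (intro add_left_mono sum_mono)
    fix s assume "s \<in> insert 1 S"
    then have "0 < s" "s < next_switch S n s" using S n next_switch_facts(4)[OF f, of s n] by auto
    then show "real (card (refinement_pts k s (next_switch S n s)))
        \<le> of_int \<lceil>log 2 (real (next_switch S n s - s)) / real k\<rceil>"
      using card_refinement_pts_le[OF k] by simp
  qed
  finally show ?thesis .
qed

lemma card_refine_path_le:
  assumes S: "S \<subseteq> {2..n}" and n: "1 \<le> n" and g: "1 \<le> g"
  defines "k \<equiv> nat \<lfloor>log 2 (real g + 1)\<rfloor>"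
  shows "real (card (refine_path k n S)) + 1 \<le> L_Cn g (card S) n * (real (card S) + 1)"
proof -
  note kf = floor_log2_facts[OF g, folded k_def]
  have f: "finite S" using S finite_subset by blast
  define A where "A = insert 1 S"
  define m where "m s = next_switch S n s - s" for s
  have "(\<Sum>s\<in>A. of_int \<lceil>log 2 (real (m s)) / real k\<rceil>) \<le> L_Cn g (card S) n * (real (card S) + 1) - (card S + 1)"
  proof (cases "S = {}")
    case True
    then have "m 1 = n" by (simp add: m_def next_switch_def)
    then show ?thesis using True kf(2) by (simp add: A_def L_Cn_def)
  next
    case False
    have "(\<Sum>s\<in>A. of_int \<lceil>log 2 (real (m s)) / real k\<rceil>)
        \<le> card A * log 2 ((\<Sum>s\<in>A. real (m s)) / card A) / real k + card A"
      using S n next_switch_facts(4)[OF f] kf(1) f unfolding A_def m_def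
      by (intro sum_ceiling_log_le) auto
    also have "(\<Sum>s\<in>A. real (m s)) = real n" using segment_lengths_sum[OF S] by (simp add: A_def m_def)
    also have "real (card A) = real (card S) + 1" unfolding A_def using f S by (subst card_insert_disjoint) auto
    finally show ?thesis using False f kf(2) by (simp add: L_Cn_def algebra_simps)
  qed
  then show ?thesis using card_refine_path_le_sum[OF S n kf(1)] by (simp add: A_def m_def)
qed

section \<open>Running the base algorithm along the segments of a path\<close>

lemma map_upt_shift:
  assumes "1 \<le> s"
  shows "map (\<lambda>j. ll (s + j - 1)) [1..<j] = map ll [s..<s + j - 1]"
proof (induction j)
  case (Suc j)
  show ?case
  proof (cases "j = 0")
    case False
    then have "[s..<s + Suc j - 1] = [s..<s + j - 1] @ [s + j - 1]"
      using assms by (metis Nat.add_diff_assoc add_Suc_right diff_Suc_1 le_add1 upt_Suc_append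
          less_one not_less plus_1_eq_Suc add.commute)
    then show ?thesis using Suc False by simp
  qed simp
qed simp

lemma sum_shift_interval:
  fixes f :: "nat \<Rightarrow> real"
  assumes "1 \<le> s"
  shows "(\<Sum>j=1..m. f (s + j - 1)) = (\<Sum>t\<in>{s..<s + m}. f t)"
proof -
  have "(\<lambda>j. s + j - 1) ` {1..m} = {s..<s + m}"
  proof
    show "{s..<s + m} \<subseteq> (\<lambda>j. s + j - 1) ` {1..m}"
    proof
      fix t assume "t \<in> {s..<s + m}"
      then have "t = s + (t - s + 1) - 1" "t - s + 1 \<in> {1..m}" by auto
      then show "t \<in> (\<lambda>j. s + j - 1) ` {1..m}" by blast
    qed
  qed (use assms in auto)
  moreover have "inj_on (\<lambda>j. s + j - 1) {1..m}" by (rule inj_onI) auto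
  ultimately show ?thesis using sum.reindex[of "\<lambda>j. s + j - 1" "{1..m}" f] by simp
qed

lemma segment_regret:
  assumes base: "base_alg_ok N A \<rho>" and vl: "\<forall>t. valid_loss N (ll t)"
    and s: "1 \<le> s" "s \<le> e" and i: "i \<in> {1..N}"
  shows "(\<Sum>t\<in>{s..<e}. ebar N (A (map ll [s..<t])) (ll t)) - (\<Sum>t\<in>{s..<e}. ll t i)
           \<le> \<rho> (real (e - s))"
proof -
  define L where "L = (\<lambda>j. ll (s + j - 1))"
  have "\<forall>t\<in>{1..e-s}. valid_loss N (L t)" using vl unfolding L_def by simp
  then have "(\<Sum>j=1..e-s. ebar N (A (map L [1..<j])) (L j)) - (\<Sum>j=1..e-s. L j i) \<le> \<rho> (real (e - s))"
    using base i unfolding base_alg_ok_def by (elim conjE allE[of _ "e - s"] allE[of _ L]) blast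
  moreover have "(\<Sum>j=1..e-s. ebar N (A (map L [1..<j])) (L j))
      = (\<Sum>j=1..e-s. ebar N (A (map ll [s..<s + j - 1])) (ll (s + j - 1)))"
    unfolding L_def map_upt_shift[OF s(1)] ..
  also have "\<dots> = (\<Sum>t\<in>{s..<e}. ebar N (A (map ll [s..<t])) (ll t))"
    using sum_shift_interval[OF s(1), of "\<lambda>t. ebar N (A (map ll [s..<t])) (ll t)" "e - s"] s
    by simp
  moreover have "(\<Sum>j=1..e-s. L j i) = (\<Sum>t\<in>{s..<e}. ll t i)"
    using sum_shift_interval[OF s(1), of "\<lambda>t. ll t i" "e - s"] s by (simp add: L_def)
  ultimately show ?thesis by simp
qed

lemma meta_loss_eq_sum_segments:
  assumes T: "T \<subseteq> {2..n}" and ST: "S \<subseteq> T"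
  shows "meta_loss ll n S a
       = (\<Sum>s\<in>insert 1 T. \<Sum>t\<in>{s..<next_switch T n s}. ll t (a (switch_count S s)))"
proof -
  have fT: "finite T" using T finite_subset by blast
  have cnt: "switch_count S t = switch_count S (tau t T)" if "t \<in> {1..n}" for t
    using tau_eq_iff_segment[OF T tau_facts(1)[OF fT], of t] that
    by (intro switch_count_on_segment[OF ST fT]) auto
  have "meta_loss ll n S a = (\<Sum>t=1..n. ll t (a (switch_count S (tau t T))))"
    unfolding meta_loss_eq_sum_switch_count[of S n, OF order_trans[OF ST T]]
  proof (rule sum.cong[OF refl])
    fix t assume "t \<in> {1..n}"
    then show "ll t (a (switch_count S t)) = ll t (a (switch_count S (tau t T)))"
      by (simp only: cnt)
  qed
  also have "\<dots> = (\<Sum>s\<in>insert 1 T. \<Sum>t\<in>{s..<next_switch T n s}. ll t (a (switch_count S s)))"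
    by (rule sum_group_by_tau[OF T])
  finally show ?thesis .
qed

text \<open>Restarting the base algorithm at every switch of \<open>T\<close> and comparing it on each segment with
  the expert the meta expert \<open>(S, a)\<close> follows there.\<close>

lemma Abar_minus_meta_loss_le:
  assumes n: "1 \<le> n" and T: "T \<subseteq> {2..n}" and ST: "S \<subseteq> T" and a: "\<forall>c\<le>card S. a c \<in> {1..N}"
    and base: "base_alg_ok N A \<rho>" and vl: "\<forall>t. valid_loss N (ll t)" and rho: "rho_ok \<rho>"
  shows "Abar N A ll n T - meta_loss ll n S a \<le> (real (card T) + 1) * \<rho> (real n / (real (card T) + 1))"
proof -
  have fT: "finite T" and fS: "finite S" using T ST finite_subset by (blast, meson finite_atLeastAtMost)
  define B where "B = insert 1 T"
  have sB: "1 \<le> s" "s \<le> n" "s < next_switch T n s" if "s \<in> B" for s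
    using that T next_switch_facts(4)[OF fT] n unfolding B_def by auto
  have "Abar N A ll n T - meta_loss ll n S a
      = (\<Sum>s\<in>B. (\<Sum>t\<in>{s..<next_switch T n s}. ebar N (A (map ll [s..<t])) (ll t))
                 - (\<Sum>t\<in>{s..<next_switch T n s}. ll t (a (switch_count S s))))"
    using sum_group_by_tau[OF T, of "\<lambda>s t. ebar N (A (map ll [s..<t])) (ll t)"]
    unfolding Abar_eq_sum_tau[OF T] meta_loss_eq_sum_segments[OF T ST] B_def
    by (simp add: sum_subtractf)
  also have "\<dots> \<le> (\<Sum>s\<in>B. \<rho> (real (next_switch T n s - s)))"
  proof (rule sum_mono)
    fix s assume s: "s \<in> B"
    have "a (switch_count S s) \<in> {1..N}" using a switch_count_le_card[OF fS] by blast
    then show "(\<Sum>t\<in>{s..<next_switch T n s}. ebar N (A (map ll [s..<t])) (ll t))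
             - (\<Sum>t\<in>{s..<next_switch T n s}. ll t (a (switch_count S s)))
           \<le> \<rho> (real (next_switch T n s - s))"
      using sB[OF s] by (intro segment_regret[OF base vl]) auto
  qed
  also have "\<dots> \<le> card B * \<rho> ((\<Sum>s\<in>B. real (next_switch T n s - s)) / card B)"
  proof (rule concave_sum_le_card_mult_mean)
    show "concave_on {0..} \<rho>" using rho by (simp add: rho_ok_def)
  qed (use fT in \<open>auto simp: B_def\<close>)
  also have "(\<Sum>s\<in>B. real (next_switch T n s - s)) = real n"
    unfolding B_def by (rule segment_lengths_sum[OF T])
  also have "real (card B) = real (card T) + 1"
    unfolding B_def using fT T by (subst card_insert_disjoint) auto
  finally show ?thesis .
qed

section \<open>Exponential weights over transition paths\<close>

definition potential :: "nat \<Rightarrow> ((nat \<Rightarrow> real) list \<Rightarrow> (nat \<Rightarrow> real)) \<Rightarrow> (nat \<Rightarrow> nat set \<Rightarrow> real)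
                         \<Rightarrow> (nat \<Rightarrow> nat \<Rightarrow> real) \<Rightarrow> nat \<Rightarrow> real \<Rightarrow> real" where
  "potential N A w ll t c = (\<Sum>S\<in>paths t. w t S * exp (- c * Abar N A ll t S))"

definition path_loss :: "nat \<Rightarrow> ((nat \<Rightarrow> real) list \<Rightarrow> (nat \<Rightarrow> real)) \<Rightarrow> (nat \<Rightarrow> nat \<Rightarrow> real)
                         \<Rightarrow> nat \<Rightarrow> nat set \<Rightarrow> real" where
  "path_loss N A ll t S = ebar N (A (map ll [tau t S..<t])) (ll t)"

lemma sum_weights_exp_pos:
  fixes w f :: "'a \<Rightarrow> real"
  assumes "finite J" "\<And>j. j \<in> J \<Longrightarrow> 0 \<le> w j" "(\<Sum>j\<in>J. w j) = 1"
  shows "0 < (\<Sum>j\<in>J. w j * exp (f j))"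
proof -
  obtain j where j: "j \<in> J" "w j \<noteq> 0" using assms(3) by (metis sum.neutral zero_neq_one)
  then have "0 < w j" using assms(2) by (simp add: order_le_neq_trans)
  then show ?thesis using assms(1,2) j by (intro sum_pos2[of J j]) auto
qed

lemma ebar_bounds:
  assumes "is_distrib N p" "valid_loss N l"
  shows "0 \<le> ebar N p l" "ebar N p l \<le> 1"
proof -
  show "0 \<le> ebar N p l" unfolding ebar_def using assms
    by (intro sum_nonneg mult_nonneg_nonneg) (auto simp: is_distrib_def valid_loss_def)
  have "ebar N p l \<le> (\<Sum>i=1..N. p i)" unfolding ebar_def using assms
    by (intro sum_mono) (auto simp: is_distrib_def valid_loss_def intro: mult_left_le)
  then show "ebar N p l \<le> 1" using assms by (simp add: is_distrib_def)
qed

lemma base_alg_distrib: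
  assumes "base_alg_ok N A \<rho>" "\<forall>t. valid_loss N (ll t)"
  shows "is_distrib N (A (map ll xs))"
  using assms unfolding base_alg_ok_def by auto

lemma path_loss_bounds:
  assumes "base_alg_ok N A \<rho>" "\<forall>t. valid_loss N (ll t)"
  shows "0 \<le> path_loss N A ll t S" "path_loss N A ll t S \<le> 1"
  unfolding path_loss_def using ebar_bounds[OF base_alg_distrib[OF assms]] assms(2) by auto

lemma Abar_Suc:
  assumes "S \<in> paths (Suc t)"
  shows "Abar N A ll (Suc t) S = Abar N A ll t (trunc t S) + path_loss N A ll (Suc t) S"
proof -
  have S: "S \<subseteq> {2..Suc t}" and S': "trunc t S \<subseteq> {2..t}"
    using assms by (auto simp: paths_def trunc_def)
  have "(\<Sum>s=1..t. ebar N (A (map ll [tau s S..<s])) (ll s)) = Abar N A ll t (trunc t S)"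
    unfolding Abar_eq_sum_tau[OF S'] by (intro sum.cong refl) (simp add: tau_trunc)
  then show ?thesis unfolding Abar_eq_sum_tau[OF S] path_loss_def by simp
qed

lemma potential_pos:
  assumes "switch_probs p"
  shows "0 < potential N A (markov_w p) ll t c"
  unfolding potential_def
  by (rule sum_weights_exp_pos[OF finite_paths]) (use assms markov_w_nonneg markov_w_sum_eq_1 in auto)

lemma potential_0: "potential N A (markov_w p) ll 0 c = 1"
  using Abar_eq_sum_tau[of "{}" 0] by (simp add: potential_def paths_0 markov_w_def)

lemma ebar_palg:
  "ebar N (palg N A w \<eta> ll t) (ll t) = (\<Sum>S\<in>paths t. qalg N A w \<eta> ll t S * path_loss N A ll t S)"
proof -
  have "ebar N (palg N A w \<eta> ll t) (ll t)
      = (\<Sum>i=1..N. \<Sum>S\<in>paths t. qalg N A w \<eta> ll t S * (A (map ll [tau t S..<t]) i * ll t i))"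
    unfolding ebar_def palg_def by (simp add: sum_distrib_right mult.assoc)
  also have "\<dots> = (\<Sum>S\<in>paths t. qalg N A w \<eta> ll t S * path_loss N A ll t S)"
    unfolding path_loss_def ebar_def by (subst sum.swap) (simp add: sum_distrib_left)
  finally show ?thesis .
qed

text \<open>One round of exponential weights: the normalised potential is an average of
  \<open>exp (-\<eta> x)\<close> over the losses \<open>x \<in> [0, 1]\<close> of the paths, to which Hoeffding's lemma applies.\<close>

lemma ln_potential_Suc_le:
  fixes \<eta> :: "nat \<Rightarrow> real" and t :: nat
  assumes sp: "switch_probs p" and base: "base_alg_ok N A \<rho>" and vl: "\<forall>t. valid_loss N (ll t)"
  defines "c \<equiv> \<eta> (Suc t)"
  shows "ln (potential N A (markov_w p) ll (Suc t) c)
     \<le> ln (potential N A (markov_w p) ll t c)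
        - c * ebar N (palg N A (markov_w p) \<eta> ll (Suc t)) (ll (Suc t)) + c\<^sup>2 / 8"
proof -
  define w where "w = markov_w p"
  define D where "D = potential N A w ll t c"
  define v where "v S = w (Suc t) S * exp (- c * Abar N A ll t (trunc t S))" for S
  define x where "x S = path_loss N A ll (Suc t) S" for S
  have D: "0 < D" unfolding D_def w_def by (rule potential_pos[OF sp])
  have vD: "(\<Sum>S\<in>paths (Suc t). v S) = D"
    unfolding v_def D_def potential_def w_def by (rule markov_w_marginal)
  have q: "qalg N A w \<eta> ll (Suc t) S = v S / D" for S
    unfolding qalg_def using vD by (simp add: v_def c_def)
  have v0: "0 \<le> v S" for S unfolding v_def w_def using markov_w_nonneg[OF sp] by simp
  have m: "ebar N (palg N A w \<eta> ll (Suc t)) (ll (Suc t)) = (\<Sum>S\<in>paths (Suc t). v S / D * x S)"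
    unfolding ebar_palg q x_def ..
  have "potential N A w ll (Suc t) c = (\<Sum>S\<in>paths (Suc t). v S * exp (- c * x S))"
    unfolding potential_def v_def x_def
    by (intro sum.cong refl) (simp add: Abar_Suc algebra_simps exp_add[symmetric])
  also have "\<dots> = D * (\<Sum>S\<in>paths (Suc t). v S / D * exp ((- c) * x S))"
    using D by (simp add: sum_distrib_left)
  also have "\<dots> \<le> D * exp ((- c) * (\<Sum>S\<in>paths (Suc t). v S / D * x S) + (- c)\<^sup>2 / 8)"
  proof (intro mult_left_mono hoeffding_lemma_finite[OF finite_paths])
    show "(\<Sum>S\<in>paths (Suc t). v S / D) = 1" using vD D by (simp add: sum_divide_distrib[symmetric])
  qed (use v0 D path_loss_bounds[OF base vl] in \<open>auto simp: x_def\<close>)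
  finally have le: "potential N A w ll (Suc t) c
      \<le> D * exp (- c * ebar N (palg N A w \<eta> ll (Suc t)) (ll (Suc t)) + c\<^sup>2 / 8)"
    unfolding m by simp
  have "0 < potential N A w ll (Suc t) c" unfolding w_def by (rule potential_pos[OF sp])
  then have "ln (potential N A w ll (Suc t) c)
      \<le> ln (D * exp (- c * ebar N (palg N A w \<eta> ll (Suc t)) (ll (Suc t)) + c\<^sup>2 / 8))"
    using le by simp
  also have "\<dots> = ln D - c * ebar N (palg N A w \<eta> ll (Suc t)) (ll (Suc t)) + c\<^sup>2 / 8"
    using D by (simp add: ln_mult)
  finally show ?thesis unfolding D_def w_def .
qed

text \<open>Lowering the learning rate from \<open>c\<close> to \<open>c'\<close> can only increase \<open>ln \<Phi> / c\<close>: the map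
  \<open>y \<mapsto> y\<^bsup>c'/c\<^esup>\<close> is concave (Jensen).\<close>

lemma ln_potential_div_mono:
  assumes sp: "switch_probs p" and c: "0 < c'" "c' \<le> c"
  shows "ln (potential N A (markov_w p) ll t c') / c' \<le> ln (potential N A (markov_w p) ll t c) / c"
proof -
  define w where "w = markov_w p"
  define y where "y S = exp (- c * Abar N A ll t S)" for S
  define r where "r = c' / c"
  have r: "0 < r" "r \<le> 1" unfolding r_def using c by auto
  have "potential N A w ll t c' = (\<Sum>S\<in>paths t. w t S * y S powr r)"
    unfolding potential_def y_def r_def using c by (simp add: powr_def)
  also have "\<dots> \<le> (\<Sum>S\<in>paths t. w t S * y S) powr r"
    using markov_w_nonneg[OF sp] markov_w_sum_eq_1
    by (intro weighted_sum_powr_le_powr_weighted_sum[OF r finite_paths]) (auto simp: w_def y_def paths_def)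
  also have "(\<Sum>S\<in>paths t. w t S * y S) = potential N A w ll t c" unfolding potential_def y_def ..
  finally have le: "potential N A w ll t c' \<le> potential N A w ll t c powr r" .
  have p1: "0 < potential N A w ll t c'" and p2: "0 < potential N A w ll t c"
    unfolding w_def using potential_pos[OF sp] by auto
  have "ln (potential N A w ll t c') \<le> ln (potential N A w ll t c powr r)"
    using le p1 p2 by (subst ln_le_cancel_iff) auto
  also have "\<dots> = c' / c * ln (potential N A w ll t c)" using p2 by (simp add: ln_powr r_def)
  finally show ?thesis unfolding w_def using c by (simp add: field_simps)
qed

lemma ln_potential_le:
  assumes sp: "switch_probs p" and base: "base_alg_ok N A \<rho>" and vl: "\<forall>t. valid_loss N (ll t)"
    and ep: "\<forall>t. 0 < \<eta> t" and ed: "\<forall>t\<ge>1. \<eta> (t + 1) \<le> \<eta> t" and n: "1 \<le> n"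
  shows "ln (potential N A (markov_w p) ll n (\<eta> n)) / \<eta> n
     \<le> - (\<Sum>t=1..n. ebar N (palg N A (markov_w p) \<eta> ll t) (ll t)) + (\<Sum>t=1..n. \<eta> t / 8)"
proof -
  define m where "m t = ebar N (palg N A (markov_w p) \<eta> ll t) (ll t)" for t
  define P where "P t c = potential N A (markov_w p) ll t c" for t c
  have step: "ln (P (Suc t) (\<eta> (Suc t))) / \<eta> (Suc t)
      \<le> ln (P t (\<eta> (Suc t))) / \<eta> (Suc t) - m (Suc t) + \<eta> (Suc t) / 8" for t
  proof -
    have e: "0 < \<eta> (Suc t)" using ep by simp
    have "ln (P (Suc t) (\<eta> (Suc t))) / \<eta> (Suc t)
        \<le> (ln (P t (\<eta> (Suc t))) - \<eta> (Suc t) * m (Suc t) + (\<eta> (Suc t))\<^sup>2 / 8) / \<eta> (Suc t)"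
      using ln_potential_Suc_le[OF sp base vl, where \<eta> = \<eta> and t = t] less_imp_le[OF ep[rule_format]]
      unfolding P_def m_def by (intro divide_right_mono)
    also have "\<dots> = ln (P t (\<eta> (Suc t))) / \<eta> (Suc t) - m (Suc t) + \<eta> (Suc t) / 8"
      using e by (simp add: field_simps power2_eq_square)
    finally show ?thesis .
  qed
  have claim: "ln (P t (\<eta> (Suc t))) / \<eta> (Suc t) \<le> - (\<Sum>s=1..t. m s) + (\<Sum>s=1..t. \<eta> s / 8)" for t
  proof (induction t)
    case 0
    then show ?case by (simp add: P_def potential_0)
  next
    case (Suc t)
    have "ln (P (Suc t) (\<eta> (Suc (Suc t)))) / \<eta> (Suc (Suc t)) \<le> ln (P (Suc t) (\<eta> (Suc t))) / \<eta> (Suc t)"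
      unfolding P_def using ed ep by (intro ln_potential_div_mono[OF sp]) auto
    then show ?case using step[of t] Suc.IH by simp
  qed
  obtain n0 where n0: "n = Suc n0" using n by (cases n) auto
  have "ln (P n (\<eta> n)) / \<eta> n \<le> - (\<Sum>s=1..n. m s) + (\<Sum>s=1..n. \<eta> s / 8)"
    using step[of n0] claim[of n0] unfolding n0 by simp
  then show ?thesis by (simp add: P_def m_def)
qed

lemma expected_loss_le_Abar:
  assumes sp: "switch_probs p" and base: "base_alg_ok N A \<rho>" and vl: "\<forall>t. valid_loss N (ll t)"
    and ep: "\<forall>t. 0 < \<eta> t" and ed: "\<forall>t\<ge>1. \<eta> (t + 1) \<le> \<eta> t" and n: "1 \<le> n"
    and T: "T \<in> paths n" and wpos: "0 < markov_w p n T"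
  shows "(\<Sum>t=1..n. ebar N (palg N A (markov_w p) \<eta> ll t) (ll t))
     \<le> Abar N A ll n T + ln (1 / markov_w p n T) / \<eta> n + (\<Sum>t=1..n. \<eta> t / 8)"
proof -
  define P where "P = potential N A (markov_w p) ll n (\<eta> n)"
  have en: "0 < \<eta> n" using ep by simp
  have "markov_w p n T * exp (- \<eta> n * Abar N A ll n T) \<le> P"
    unfolding P_def potential_def using markov_w_nonneg[OF sp]
    by (intro member_le_sum[OF T _ finite_paths]) simp
  moreover have "0 < P" unfolding P_def by (rule potential_pos[OF sp])
  ultimately have "ln (markov_w p n T * exp (- \<eta> n * Abar N A ll n T)) \<le> ln P"
    using wpos by (subst ln_le_cancel_iff) auto
  then have "ln (markov_w p n T) - \<eta> n * Abar N A ll n T \<le> ln P"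
    using wpos by (simp add: ln_mult)
  then have "(ln (markov_w p n T) - \<eta> n * Abar N A ll n T) / \<eta> n \<le> ln P / \<eta> n"
    using en by (simp add: divide_right_mono)
  also have "(ln (markov_w p n T) - \<eta> n * Abar N A ll n T) / \<eta> n
      = ln (markov_w p n T) / \<eta> n - Abar N A ll n T"
    using en by (simp add: field_simps)
  finally have "ln (markov_w p n T) / \<eta> n - Abar N A ll n T \<le> ln P / \<eta> n" .
  then show ?thesis
    using ln_potential_le[OF assms(1-6)] wpos unfolding P_def by (simp add: ln_div)
qed

section \<open>Concentration along action histories\<close>

definition histories :: "nat \<Rightarrow> nat \<Rightarrow> nat list set" where
  "histories N n = {hs. length hs = n \<and> set hs \<subseteq> {1..N}}"

definition history_prob :: "(nat list \<Rightarrow> nat \<Rightarrow> real) \<Rightarrow> nat list \<Rightarrow> real" where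
  "history_prob P hs = (\<Prod>t=1..length hs. P (take (t - 1) hs) (hs ! (t - 1)))"

definition martingale_sum :: "nat \<Rightarrow> (nat list \<Rightarrow> nat \<Rightarrow> real) \<Rightarrow> (nat list \<Rightarrow> nat \<Rightarrow> real)
                              \<Rightarrow> nat list \<Rightarrow> real" where
  "martingale_sum N P X hs = (\<Sum>t=1..length hs. X (take (t - 1) hs) (hs ! (t - 1))
                     - (\<Sum>i=1..N. P (take (t - 1) hs) i * X (take (t - 1) hs) i))"

lemma finite_histories: "finite (histories N n)"
  using finite_lists_length_eq[of "{1..N}" n] by (simp add: histories_def conj_commute)

lemma histories_0: "histories N 0 = {[]}"
  by (auto simp: histories_def)

lemma sum_histories_Suc:
  "(\<Sum>hs\<in>histories N (Suc n). f hs) = (\<Sum>h\<in>histories N n. \<Sum>i=1..N. f (h @ [i]))"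
proof -
  have "histories N (Suc n) = (\<lambda>(h, i). h @ [i]) ` (histories N n \<times> {1..N})"
  proof
    show "histories N (Suc n) \<subseteq> (\<lambda>(h, i). h @ [i]) ` (histories N n \<times> {1..N})"
    proof
      fix hs assume hs: "hs \<in> histories N (Suc n)"
      then have ne: "hs \<noteq> []" by (auto simp: histories_def)
      then have "hs = butlast hs @ [last hs]" by simp
      moreover have "butlast hs \<in> histories N n" "last hs \<in> {1..N}"
        using hs last_in_set[OF ne] by (auto simp: histories_def dest: in_set_butlastD)
      ultimately show "hs \<in> (\<lambda>(h, i). h @ [i]) ` (histories N n \<times> {1..N})" by force
    qed
  qed (auto simp: histories_def)
  moreover have "inj_on (\<lambda>(h, i). h @ [i]) (histories N n \<times> {1..N})"
    by (rule inj_onI) auto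
  ultimately show ?thesis by (simp add: sum.reindex sum.cartesian_product split_def)
qed

lemma history_prob_snoc: "history_prob P (h @ [i]) = history_prob P h * P h i"
proof -
  have "(\<Prod>t=1..length h. P (take (t - 1) (h @ [i])) ((h @ [i]) ! (t - 1))) = history_prob P h"
    unfolding history_prob_def by (intro prod.cong refl) (auto simp: nth_append)
  then show ?thesis unfolding history_prob_def by (simp add: prod.cl_ivl_Suc)
qed

lemma martingale_sum_snoc:
  "martingale_sum N P X (h @ [i]) = martingale_sum N P X h + (X h i - (\<Sum>j=1..N. P h j * X h j))"
proof -
  have "(\<Sum>t=1..length h. X (take (t - 1) (h @ [i])) ((h @ [i]) ! (t - 1))
                     - (\<Sum>j=1..N. P (take (t - 1) (h @ [i])) j * X (take (t - 1) (h @ [i])) j))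
      = martingale_sum N P X h"
    unfolding martingale_sum_def by (intro sum.cong refl) (auto simp: nth_append)
  then show ?thesis unfolding martingale_sum_def by (simp add: sum.cl_ivl_Suc)
qed

locale history_process =
  fixes N :: nat and P X :: "nat list \<Rightarrow> nat \<Rightarrow> real"
  assumes P_nonneg: "\<And>h i. i \<in> {1..N} \<Longrightarrow> 0 \<le> P h i"
    and sum_P: "\<And>h. (\<Sum>i=1..N. P h i) = 1"
    and X_bounds: "\<And>h i. 0 \<le> X h i \<and> X h i \<le> 1"
begin

lemma history_prob_nonneg: "hs \<in> histories N n \<Longrightarrow> 0 \<le> history_prob P hs"
  unfolding history_prob_def histories_def by (intro prod_nonneg) (auto intro!: P_nonneg simp: subset_iff)

lemma sum_history_prob: "(\<Sum>hs\<in>histories N n. history_prob P hs) = 1"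
proof (induction n)
  case 0
  then show ?case by (simp add: histories_0 history_prob_def)
next
  case (Suc n)
  have "(\<Sum>hs\<in>histories N (Suc n). history_prob P hs) = (\<Sum>h\<in>histories N n. history_prob P h * (\<Sum>i=1..N. P h i))"
    unfolding sum_histories_Suc history_prob_snoc by (simp add: sum_distrib_left)
  then show ?case using Suc sum_P by simp
qed

lemma martingale_mgf_le:
  "(\<Sum>hs\<in>histories N n. history_prob P hs * exp (\<theta> * martingale_sum N P X hs)) \<le> exp (\<theta>\<^sup>2 * n / 8)"
proof (induction n)
  case 0
  then show ?case by (simp add: histories_0 history_prob_def martingale_sum_def)
next
  case (Suc n)
  have step: "(\<Sum>i=1..N. P h i * exp (\<theta> * (X h i - (\<Sum>j=1..N. P h j * X h j)))) \<le> exp (\<theta>\<^sup>2 / 8)" for h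
  proof -
    define m where "m = (\<Sum>j=1..N. P h j * X h j)"
    have "(\<Sum>i=1..N. P h i * exp (\<theta> * (X h i - m))) = (\<Sum>i=1..N. P h i * exp (\<theta> * X h i)) * exp (- \<theta> * m)"
      unfolding sum_distrib_right by (intro sum.cong refl) (simp add: exp_add[symmetric] algebra_simps)
    also have "\<dots> \<le> exp (\<theta> * m + \<theta>\<^sup>2 / 8) * exp (- \<theta> * m)"
      using hoeffding_lemma_finite[of "{1..N}" "P h" "X h" \<theta>] P_nonneg sum_P X_bounds
      unfolding m_def by simp
    finally show ?thesis by (simp add: m_def exp_add[symmetric])
  qed
  have "(\<Sum>hs\<in>histories N (Suc n). history_prob P hs * exp (\<theta> * martingale_sum N P X hs))
      = (\<Sum>h\<in>histories N n. history_prob P h * exp (\<theta> * martingale_sum N P X h) *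
           (\<Sum>i=1..N. P h i * exp (\<theta> * (X h i - (\<Sum>j=1..N. P h j * X h j)))))"
    unfolding sum_histories_Suc history_prob_snoc martingale_sum_snoc sum_distrib_left
    by (intro sum.cong refl) (simp add: distrib_left exp_add mult_ac)
  also have "\<dots> \<le> (\<Sum>h\<in>histories N n. history_prob P h * exp (\<theta> * martingale_sum N P X h) * exp (\<theta>\<^sup>2 / 8))"
    by (intro sum_mono mult_left_mono step) (simp add: history_prob_nonneg)
  also have "\<dots> \<le> exp (\<theta>\<^sup>2 * n / 8) * exp (\<theta>\<^sup>2 / 8)"
    using Suc by (simp add: sum_distrib_right[symmetric])
  also have "\<dots> = exp (\<theta>\<^sup>2 * Suc n / 8)" by (simp add: exp_add[symmetric] field_simps)
  finally show ?case .
qed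

text \<open>Azuma--Hoeffding: Chernoff's bound applied to \<open>martingale_mgf_le\<close> with
  \<open>\<theta> = 4x/n\<close> and \<open>x = \<surd>(n/2 \<cdot> ln (1/\<delta>))\<close>.\<close>

lemma martingale_deviation:
  assumes d: "0 < \<delta>" "\<delta> < 1" and n: "1 \<le> n"
    and E: "\<And>hs. hs \<in> histories N n \<Longrightarrow> \<not> E hs \<Longrightarrow> sqrt (n / 2 * ln (1 / \<delta>)) < martingale_sum N P X hs"
  shows "(\<Sum>hs\<in>{hs\<in>histories N n. E hs}. history_prob P hs) \<ge> 1 - \<delta>"
proof -
  define x where "x = sqrt (n / 2 * ln (1 / \<delta>))"
  define \<theta> where "\<theta> = 4 * x / n"
  have lnd: "0 < ln (1 / \<delta>)" using d by simp
  then have x0: "0 < x" and x2: "x\<^sup>2 = n / 2 * ln (1 / \<delta>)" unfolding x_def using n by simp_all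
  have \<theta>0: "0 \<le> \<theta>" unfolding \<theta>_def using x0 by simp
  have "(\<Sum>hs\<in>{hs\<in>histories N n. \<not> E hs}. history_prob P hs)
      \<le> (\<Sum>hs\<in>{hs\<in>histories N n. \<not> E hs}. history_prob P hs * exp (\<theta> * (martingale_sum N P X hs - x)))"
  proof (rule sum_mono)
    fix hs assume hs: "hs \<in> {hs\<in>histories N n. \<not> E hs}"
    then have e1: "1 \<le> exp (\<theta> * (martingale_sum N P X hs - x))" using E \<theta>0 unfolding x_def by force
    have "0 \<le> history_prob P hs" using history_prob_nonneg hs by blast
    from mult_left_mono[OF e1 this]
    show "history_prob P hs \<le> history_prob P hs * exp (\<theta> * (martingale_sum N P X hs - x))" by simp
  qed
  also have "\<dots> \<le> (\<Sum>hs\<in>histories N n. history_prob P hs * exp (\<theta> * (martingale_sum N P X hs - x)))"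
    by (rule sum_mono2[OF finite_histories]) (auto intro!: mult_nonneg_nonneg history_prob_nonneg)
  also have "\<dots> = (\<Sum>hs\<in>histories N n. history_prob P hs * exp (\<theta> * martingale_sum N P X hs)) * exp (- \<theta> * x)"
    unfolding sum_distrib_right
    by (intro sum.cong refl) (simp add: mult.assoc exp_add[symmetric] algebra_simps)
  also have "\<dots> \<le> exp (\<theta>\<^sup>2 * n / 8) * exp (- \<theta> * x)" using martingale_mgf_le by simp
  also have "\<dots> = exp (- 2 * x\<^sup>2 / n)"
    unfolding \<theta>_def using n by (simp add: exp_add[symmetric] field_simps power2_eq_square)
  also have "\<dots> = \<delta>" unfolding x2 using n d by (simp add: ln_div)
  finally have "(\<Sum>hs\<in>{hs\<in>histories N n. \<not> E hs}. history_prob P hs) \<le> \<delta>" .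
  moreover have "(\<Sum>hs\<in>histories N n. history_prob P hs)
      = (\<Sum>hs\<in>{hs\<in>histories N n. E hs}. history_prob P hs) + (\<Sum>hs\<in>{hs\<in>histories N n. \<not> E hs}. history_prob P hs)"
    using finite_histories by (subst sum.union_disjoint[symmetric]) (auto intro: sum.cong)
  ultimately show ?thesis using sum_history_prob[of n] by linarith
qed

end

section \<open>The randomised algorithm and its regret\<close>

lemma Abar_cong:
  assumes "S \<subseteq> {2..u}" "\<And>s. 1 \<le> s \<Longrightarrow> s \<le> u \<Longrightarrow> ll s = ll' s"
  shows "Abar N A ll u S = Abar N A ll' u S"
proof -
  have f: "finite S" using assms(1) finite_subset by blast
  show ?thesis unfolding Abar_eq_sum_tau[OF assms(1)]
  proof (intro sum.cong refl)
    fix s assume "s \<in> {1..u}"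
    then have "map ll [tau s S..<s] = map ll' [tau s S..<s]" "ll s = ll' s"
      using assms(2) tau_facts(2)[OF f, of s] by auto
    then show "ebar N (A (map ll [tau s S..<s])) (ll s) = ebar N (A (map ll' [tau s S..<s])) (ll' s)"
      by (simp only:)
  qed
qed

lemma palg_cong:
  assumes "\<And>s. 1 \<le> s \<Longrightarrow> s < t \<Longrightarrow> ll s = ll' s"
  shows "palg N A w \<eta> ll t = palg N A w \<eta> ll' t"
proof -
  have Abar: "Abar N A ll (t - 1) (trunc (t - 1) S) = Abar N A ll' (t - 1) (trunc (t - 1) S)"
    if "S \<in> paths t" for S
    by (rule Abar_cong) (use assms that in \<open>auto simp: trunc_def paths_def\<close>)
  then have "qalg N A w \<eta> ll t S = qalg N A w \<eta> ll' t S" if "S \<in> paths t" for S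
    unfolding qalg_def using that by (simp cong: sum.cong)
  moreover have "map ll [tau t S..<t] = map ll' [tau t S..<t]" if "S \<in> paths t" for S
  proof -
    have "finite S" using that finite_subset by (auto simp: paths_def)
    then show ?thesis using assms tau_facts(2)[of S t] by auto
  qed
  ultimately show ?thesis unfolding palg_def by (intro ext sum.cong refl) (simp only:)
qed

lemma qalg_nonneg_sum:
  assumes "switch_probs p"
  shows "0 \<le> qalg N A (markov_w p) \<eta> ll t S" "(\<Sum>S\<in>paths t. qalg N A (markov_w p) \<eta> ll t S) = 1"
proof -
  define v where "v S = markov_w p t S * exp (- \<eta> t * Abar N A ll (t - 1) (trunc (t - 1) S))" for S
  have v0: "0 \<le> v S" for S unfolding v_def using markov_w_nonneg[OF assms] by simp
  have D: "0 < (\<Sum>S\<in>paths t. v S)"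
    unfolding v_def using markov_w_nonneg[OF assms] markov_w_sum_eq_1
    by (intro sum_weights_exp_pos finite_paths) auto
  have q: "qalg N A (markov_w p) \<eta> ll t S = v S / (\<Sum>S\<in>paths t. v S)" for S
    unfolding qalg_def v_def ..
  show "0 \<le> qalg N A (markov_w p) \<eta> ll t S" unfolding q using v0 D by simp
  show "(\<Sum>S\<in>paths t. qalg N A (markov_w p) \<eta> ll t S) = 1"
    unfolding q using D by (simp add: sum_divide_distrib[symmetric])
qed

lemma palg_distrib:
  assumes sp: "switch_probs p" and base: "base_alg_ok N A \<rho>" and vl: "\<forall>t. valid_loss N (ll t)"
  shows "is_distrib N (palg N A (markov_w p) \<eta> ll t)"
proof -
  have d: "is_distrib N (A (map ll xs))" for xs by (rule base_alg_distrib[OF base vl])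
  have "(\<Sum>i=1..N. palg N A (markov_w p) \<eta> ll t i)
      = (\<Sum>S\<in>paths t. qalg N A (markov_w p) \<eta> ll t S * (\<Sum>i=1..N. A (map ll [tau t S..<t]) i))"
    unfolding palg_def by (subst sum.swap) (simp add: sum_distrib_left)
  also have "\<dots> = 1" using d qalg_nonneg_sum(2)[OF sp] by (simp add: is_distrib_def)
  finally show ?thesis
    using d qalg_nonneg_sum(1)[OF sp] unfolding is_distrib_def palg_def
    by (auto intro!: sum_nonneg mult_nonneg_nonneg)
qed

lemma valid_loss_of: "\<forall>h. valid_loss N (adv h) \<Longrightarrow> \<forall>t. valid_loss N (loss_of adv hs t)"
  unfolding loss_of_def by simp

definition play_dist :: "nat \<Rightarrow> ((nat \<Rightarrow> real) list \<Rightarrow> (nat \<Rightarrow> real)) \<Rightarrow> (nat \<Rightarrow> nat set \<Rightarrow> real)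
                         \<Rightarrow> (nat \<Rightarrow> real) \<Rightarrow> (nat list \<Rightarrow> nat \<Rightarrow> real) \<Rightarrow> nat list \<Rightarrow> nat \<Rightarrow> real" where
  "play_dist N A w \<eta> adv h = palg N A w \<eta> (loss_of adv h) (Suc (length h))"

definition masked_loss :: "nat \<Rightarrow> (nat list \<Rightarrow> nat \<Rightarrow> real) \<Rightarrow> nat list \<Rightarrow> nat \<Rightarrow> real" where
  "masked_loss N adv h i = (if i \<in> {1..N} then adv h i else 0)"

lemma play_dist_take:
  assumes "1 \<le> t" "t \<le> length hs + 1"
  shows "play_dist N A w \<eta> adv (take (t - 1) hs) = palg N A w \<eta> (loss_of adv hs) t"
proof -
  have "Suc (length (take (t - 1) hs)) = t" using assms by simp
  then show ?thesis
    unfolding play_dist_def by (simp only:) (rule palg_cong, simp add: loss_of_def min_def)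
qed

lemma history_process_play_dist:
  assumes "switch_probs p" "base_alg_ok N A \<rho>" "\<forall>h. valid_loss N (adv h)"
  shows "history_process N (play_dist N A (markov_w p) \<eta> adv) (masked_loss N adv)"
proof
  fix h
  show "\<And>i. i \<in> {1..N} \<Longrightarrow> 0 \<le> play_dist N A (markov_w p) \<eta> adv h i"
    "(\<Sum>i=1..N. play_dist N A (markov_w p) \<eta> adv h i) = 1"
    using palg_distrib[OF assms(1,2) valid_loss_of[OF assms(3)]]
    by (simp_all add: play_dist_def is_distrib_def)
  show "\<And>i. 0 \<le> masked_loss N adv h i \<and> masked_loss N adv h i \<le> 1"
    using assms(3) by (simp add: masked_loss_def valid_loss_def)
qed

lemma history_prob_play_dist:
  assumes "hs \<in> histories N n"
  shows "history_prob (play_dist N A w \<eta> adv) hs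
       = (\<Prod>t=1..n. palg N A w \<eta> (loss_of adv hs) t (hs ! (t - 1)))"
  using assms play_dist_take[of _ hs] unfolding history_prob_def
  by (intro prod.cong) (auto simp: histories_def)

lemma martingale_sum_play_dist:
  assumes hs: "hs \<in> histories N n"
  shows "martingale_sum N (play_dist N A w \<eta> adv) (masked_loss N adv) hs
       = Lhat adv n hs - (\<Sum>t=1..n. ebar N (palg N A w \<eta> (loss_of adv hs) t) (loss_of adv hs t))"
proof -
  have "martingale_sum N (play_dist N A w \<eta> adv) (masked_loss N adv) hs
      = (\<Sum>t=1..n. loss_of adv hs t (hs ! (t - 1))
                   - ebar N (palg N A w \<eta> (loss_of adv hs) t) (loss_of adv hs t))"
    unfolding martingale_sum_def
  proof (intro sum.cong)
    fix t assume t: "t \<in> {1..n}"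
    then have "hs ! (t - 1) \<in> set hs" using hs by (intro nth_mem) (auto simp: histories_def)
    then have "hs ! (t - 1) \<in> {1..N}" using hs by (auto simp: histories_def)
    moreover have "play_dist N A w \<eta> adv (take (t - 1) hs) = palg N A w \<eta> (loss_of adv hs) t"
      using t hs by (intro play_dist_take) (auto simp: histories_def)
    ultimately show "masked_loss N adv (take (t - 1) hs) (hs ! (t - 1))
        - (\<Sum>i=1..N. play_dist N A w \<eta> adv (take (t - 1) hs) i * masked_loss N adv (take (t - 1) hs) i)
      = loss_of adv hs t (hs ! (t - 1)) - ebar N (palg N A w \<eta> (loss_of adv hs) t) (loss_of adv hs t)"
      unfolding ebar_def by (auto simp: masked_loss_def loss_of_def intro!: sum.cong)
  qed (use hs in \<open>simp add: histories_def\<close>)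
  then show ?thesis unfolding Lhat_def by (simp add: sum_subtractf)
qed

lemma alg_prob_regret_ge:
  assumes sp: "switch_probs p" and base: "base_alg_ok N A \<rho>" and adv: "\<forall>h. valid_loss N (adv h)"
    and d: "0 < \<delta>" "\<delta> < 1" and n: "1 \<le> n"
    and expected: "\<And>hs. (\<Sum>t=1..n. ebar N (palg N A (markov_w p) \<eta> (loss_of adv hs) t) (loss_of adv hs t))
                          - F hs \<le> D"
  defines "E \<equiv> \<lambda>hs. Lhat adv n hs - F hs \<le> D + sqrt (n / 2 * ln (1 / \<delta>))"
  shows "alg_prob N A (markov_w p) \<eta> adv n E \<ge> 1 - \<delta>"
proof -
  interpret history_process N "play_dist N A (markov_w p) \<eta> adv" "masked_loss N adv"
    by (rule history_process_play_dist[OF sp base adv])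
  have "1 - \<delta> \<le> (\<Sum>hs\<in>{hs\<in>histories N n. E hs}. history_prob (play_dist N A (markov_w p) \<eta> adv) hs)"
  proof (rule martingale_deviation[OF d n])
    fix hs assume "hs \<in> histories N n" "\<not> E hs"
    then show "sqrt (n / 2 * ln (1 / \<delta>)) < martingale_sum N (play_dist N A (markov_w p) \<eta> adv) (masked_loss N adv) hs"
      using expected[of hs] martingale_sum_play_dist[of hs N n A "markov_w p" \<eta> adv]
      unfolding E_def by linarith
  qed
  also have "\<dots> = alg_prob N A (markov_w p) \<eta> adv n E"
    unfolding alg_prob_def using history_prob_play_dist
    by (intro sum.cong) (auto simp: histories_def)
  finally show ?thesis .
qed

lemma r_n_mono:
  assumes "0 < \<epsilon>" "\<epsilon> < 1" "1 \<le> n" "c1 \<le> c2"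
  shows "r_n \<epsilon> n c1 \<le> r_n \<epsilon> n c2"
proof -
  have "0 \<le> (c2 - c1) * (ln (real n) - ln \<epsilon>)" using assms by simp
  then show ?thesis unfolding r_n_def by (simp add: algebra_simps)
qed

lemma expected_regret_le:
  assumes n: "1 \<le> n" and g: "1 \<le> g" and e: "0 < \<epsilon>" "\<epsilon> < 1"
    and rho: "rho_ok \<rho>" and base: "base_alg_ok N A \<rho>" and vl: "\<forall>t. valid_loss N (ll t)"
    and ep: "\<forall>t. 0 < \<eta> t" and ed: "\<forall>t\<ge>1. \<eta> (t + 1) \<le> \<eta> t"
    and S: "S \<in> paths n" and a: "\<forall>c\<le>card S. a c \<in> {1..N}"
  shows "(\<Sum>t=1..n. ebar N (palg N A (whatL1 g \<epsilon>) \<eta> ll t) (ll t)) - meta_loss ll n S a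
    \<le> L_Cn g (card S) n * (card S + 1) * \<rho> (n / (L_Cn g (card S) n * (card S + 1)))
       + (\<Sum>t=1..n. \<eta> t / 8) + r_n \<epsilon> n (L_Cn g (card S) n * (card S + 1) - 1) / \<eta> n"
proof -
  define k where "k = nat \<lfloor>log 2 (real g + 1)\<rfloor>"
  define T where "T = refine_path k n S"
  define X where "X = L_Cn g (card S) n * (card S + 1)"
  note kf = floor_log2_facts[OF g, folded k_def]
  have S': "S \<subseteq> {2..n}" using S by (simp add: paths_def)
  have T: "T \<subseteq> {2..n}" "S \<subseteq> T" using refine_path_facts[OF S'] by (simp_all add: T_def)
  have w: "0 < whatL1 g \<epsilon> n T" "ln (1 / whatL1 g \<epsilon> n T) \<le> r_n \<epsilon> n (card T)"
    using ln_inverse_whatL1_le[OF e(1) n T(1)] refine_path_unpruned[OF S' kf(1,3)]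
    by (simp_all add: T_def)
  have card: "real (card T) + 1 \<le> X"
    using card_refine_path_le[OF S' n g] by (simp add: T_def X_def k_def add.commute)
  have "(\<Sum>t=1..n. ebar N (palg N A (whatL1 g \<epsilon>) \<eta> ll t) (ll t))
      \<le> Abar N A ll n T + ln (1 / whatL1 g \<epsilon> n T) / \<eta> n + (\<Sum>t=1..n. \<eta> t / 8)"
    using expected_loss_le_Abar[OF phatL1_switch_probs[OF e(1)] base vl ep ed n] T(1) w(1)
    by (simp add: whatL1_def paths_def)
  moreover have "Abar N A ll n T - meta_loss ll n S a \<le> X * \<rho> (n / X)"
    using Abar_minus_meta_loss_le[OF n T a base vl rho]
      concave_perspective_mono[of \<rho> "real (card T) + 1" X n] rho card
    by (simp add: rho_ok_def)
  moreover have "ln (1 / whatL1 g \<epsilon> n T) / \<eta> n \<le> r_n \<epsilon> n (X - 1) / \<eta> n"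
    using w(2) r_n_mono[OF e n, of "card T" "X - 1"] card ep
    by (intro divide_right_mono) (auto simp: less_imp_le)
  ultimately show ?thesis unfolding X_def by linarith
qed

theorem corollary1:
  fixes N n g :: nat and \<epsilon> \<delta> :: real and \<rho> :: "real \<Rightarrow> real"
    and A :: "(nat \<Rightarrow> real) list \<Rightarrow> (nat \<Rightarrow> real)"
    and \<eta> :: "nat \<Rightarrow> real" and adv :: "nat list \<Rightarrow> nat \<Rightarrow> real"
    and S :: "nat set" and a :: "nat \<Rightarrow> nat"
  assumes "N \<ge> 1" and "n \<ge> 1" and "g \<ge> 1"
    and "0 < \<epsilon>" and "\<epsilon> < 1" and "0 < \<delta>" and "\<delta> < 1"
    and "\<forall>h. valid_loss N (adv h)"
    and "rho_ok \<rho>" and "base_alg_ok N A \<rho>"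
    and "\<forall>t. 0 < \<eta> t" and "\<forall>t\<ge>1. \<eta> (t + 1) \<le> \<eta> t"
    and "S \<in> paths n" and "\<forall>c\<le>card S. a c \<in> {1..N}"
  shows "alg_prob N A (whatL1 g \<epsilon>) \<eta> adv n
           (\<lambda>hs. Lhat adv n hs - meta_loss (loss_of adv hs) n S a \<le>
              L_Cn g (card S) n * (card S + 1) * \<rho> (n / (L_Cn g (card S) n * (card S + 1)))
              + (\<Sum>t=1..n. \<eta> t / 8)
              + r_n \<epsilon> n (L_Cn g (card S) n * (card S + 1) - 1) / \<eta> n
              + sqrt (n / 2 * ln (1 / \<delta>)))
         \<ge> 1 - \<delta>"
  using alg_prob_regret_ge[OF phatL1_switch_probs[OF assms(4)] assms(10,8,6,7,2)]
    expected_regret_le[OF assms(2,3,4,5,9,10) valid_loss_of[OF assms(8)] assms(11-14)]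
  by (simp add: whatL1_def)

end
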